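(* Let $f:\mathbb{R}^n\to\mathbb{R}$ be of class $C^{2+}$ with $L_f$-Lipschitz continuous gradient, let $g:\mathbb{R}^n\to\mathbb{R}\cup\{+\infty\}$ be proper, lower semicontinuous and $\rho$-weakly convex, let $\varphi=f+g$ with $\operatorname{argmin}\varphi\neq\emptyset$, and suppose $\{x:\varphi(x)\le\varphi(x^0)\}$ is bounded. Suppose the iterates $(x^k)$ generated by the NTRA algorithm described in the context converge to a critical point $x^\star$, that $f$ is of class $C^3$ locally around $x^\star$ and $\operatorname{prox}_{\gamma g}$ is of class $C^1$ locally around $x^\star-\gamma\nabla f(x^\star)$ (with $\gamma$ the stepsize of the algorithm, assumed sufficiently small), and that there is $\beta_2>0$ such that for every $k$ with $B_k$ indefinite, $m_k(0)-m_k(d^k)\ge\beta_2(-\lambda_{\min}(B_k))\delta_k^2$. Then $x^\star$ is a second-order stationary point of $\varphi$.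
   Context: $C^{2+}$: twice continuously differentiable with locally Lipschitz Hessian; $g$ is $\rho$-weakly convex if $g+\frac\rho2\|\cdot\|^2$ is convex. $\operatorname{prox}_{\gamma g}(x)=\operatorname{argmin}_z\{g(z)+\frac1{2\gamma}\|z-x\|^2\}$, $T_\gamma(x)=\operatorname{prox}_{\gamma g}(x-\gamma\nabla f(x))$, $R_\gamma(x)=\gamma^{-1}(x-T_\gamma(x))$; $x^\star$ is critical if $x^\star\in T_\gamma(x^\star)$. Forward-backward envelope $\varphi_\gamma(x)=\inf_u\{f(x)+\langle\nabla f(x),u-x\rangle+g(u)+\frac1{2\gamma}\|u-x\|^2\}$. $\partial_C$: Clarke generalized Jacobian. A point $x^\star$ is a second-order stationary point of $\varphi$ if $0\in\partial\varphi(x^\star)$ (limiting subdifferential) and $\mathrm d^2\varphi(x^\star,0)(d)\ge0$ for all $d$, with $\mathrm d^2$ the second subderivative (Rockafellar–Wets Def. 13.3). NTRA: given $x^0$, $\gamma\in(0,\min\{1/L_f,1/\rho\})$, $\delta_0>0$, $0<\mu_1<\mu_2<1$, $0<c_1<c_2<1<c_3$; for $k=0,1,\dots$: select $P_k\in\partial_C\operatorname{prox}_{\gamma g}(x^k-\gamma\nabla f(x^k))$; $Q_k=I-\gamma\nabla^2f(x^k)$, $B_k=\gamma^{-1}Q_k(I-P_kQ_k)$; stop if $R_\gamma(x^k)=0$ and $\lambda_{\min}(B_k)\ge0$; $d^k$ is an (approximate) solution of $\min_d m_k(d):=\varphi_\gamma(x^k)+\langle\nabla\varphi_\gamma(x^k),d\rangle+\frac12\langle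 B_kd,d\rangle$ s.t. $\|d\|\le\delta_k$; $\rho_k=\frac{\varphi_\gamma(x^k)-\varphi_\gamma(x^k+d^k)}{m_k(0)-m_k(d^k)}$; $x^{k+1}=x^k$ if $\rho_k<\mu_1$, else $x^k+d^k$; $\delta_{k+1}=c_1\delta_k$ if $\rho_k<\mu_1$, $c_2\delta_k$ if $\mu_1\le\rho_k<\mu_2$, $c_3\delta_k$ if $\rho_k\ge\mu_2$. *)

theory Defs
  imports "HOL-Analysis.Analysis"
begin

type_synonym 'n vec = "real ^ 'n"
type_synonym 'n mat = "real ^ 'n ^ 'n"

definition proper_fun :: "('n::finite vec \<Rightarrow> ereal) \<Rightarrow> bool" where
  "proper_fun g \<longleftrightarrow> (\<forall>x. g x \<noteq> -\<infinity>) \<and> (\<exists>x. g x \<noteq> \<infinity>)"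

definition lsc_fun :: "('n::finite vec \<Rightarrow> ereal) \<Rightarrow> bool" where
  "lsc_fun g \<longleftrightarrow> (\<forall>x. g x \<le> Liminf (at x) g)"

definition econvex :: "('n::finite vec \<Rightarrow> ereal) \<Rightarrow> bool" where
  "econvex h \<longleftrightarrow> (\<forall>x y t. 0 < t \<and> t < 1 \<longrightarrow>
      h ((1 - t) *\<^sub>R x + t *\<^sub>R y) \<le> ereal (1 - t) * h x + ereal t * h y)"

definition weakly_convex :: "real \<Rightarrow> ('n::finite vec \<Rightarrow> ereal) \<Rightarrow> bool" where
  "weakly_convex \<rho> g \<longleftrightarrow> econvex (\<lambda>x. g x + ereal (\<rho> / 2 * (norm x)\<^sup>2))"

definition prox_set :: "('n::finite vec \<Rightarrow> ereal) \<Rightarrow> real \<Rightarrow> 'n vec \<Rightarrow> 'n vec set" where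
  "prox_set g \<gamma> x = {z. \<forall>u. g z + ereal ((norm (z - x))\<^sup>2 / (2 * \<gamma>))
                              \<le> g u + ereal ((norm (u - x))\<^sup>2 / (2 * \<gamma>))}"

text \<open>The proximal mapping (single-valued when \<open>\<gamma> < 1/\<rho>\<close>).\<close>
definition prox :: "('n::finite vec \<Rightarrow> ereal) \<Rightarrow> real \<Rightarrow> 'n vec \<Rightarrow> 'n vec" where
  "prox g \<gamma> x = (SOME z. z \<in> prox_set g \<gamma> x)"

definition fbe :: "('n::finite vec \<Rightarrow> real) \<Rightarrow> ('n vec \<Rightarrow> 'n vec) \<Rightarrow> ('n vec \<Rightarrow> ereal)
                   \<Rightarrow> real \<Rightarrow> 'n vec \<Rightarrow> real" where
  "fbe f G g \<gamma> x = real_of_ereal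
     (INF u. ereal (f x + G x \<bullet> (u - x)) + g u + ereal ((norm (u - x))\<^sup>2 / (2 * \<gamma>)))"

definition grad :: "('n::finite vec \<Rightarrow> real) \<Rightarrow> 'n vec \<Rightarrow> 'n vec" where
  "grad F x = (THE v. (F has_derivative (\<lambda>h. v \<bullet> h)) (at x))"

definition bouligand_jac :: "('n::finite vec \<Rightarrow> 'n vec) \<Rightarrow> 'n vec \<Rightarrow> 'n mat set" where
  "bouligand_jac F x = {M. \<exists>xs Ms. xs \<longlonglongrightarrow> x \<and> Ms \<longlonglongrightarrow> M \<and>
       (\<forall>k. (F has_derivative (\<lambda>h. Ms k *v h)) (at (xs k)))}"

definition clarke_jac :: "('n::finite vec \<Rightarrow> 'n vec) \<Rightarrow> 'n vec \<Rightarrow> 'n mat set" where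
  "clarke_jac F x = convex hull (bouligand_jac F x)"

definition lambda_min :: "'n::finite mat \<Rightarrow> real" where
  "lambda_min B = Min {l. \<exists>v. v \<noteq> 0 \<and> B *v v = l *\<^sub>R v}"

definition frechet_subdiff :: "('n::finite vec \<Rightarrow> ereal) \<Rightarrow> 'n vec \<Rightarrow> 'n vec set" where
  "frechet_subdiff \<phi> x = {v. \<bar>\<phi> x\<bar> \<noteq> \<infinity> \<and>
      (\<forall>\<epsilon>>0. \<exists>\<eta>>0. \<forall>z. norm (z - x) < \<eta> \<longrightarrow>
          \<phi> z \<ge> \<phi> x + ereal (v \<bullet> (z - x) - \<epsilon> * norm (z - x)))}"

definition limiting_subdiff :: "('n::finite vec \<Rightarrow> ereal) \<Rightarrow> 'n vec \<Rightarrow> 'n vec set" where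
  "limiting_subdiff \<phi> x = {v. \<exists>xs vs. xs \<longlonglongrightarrow> x \<and> (\<lambda>k. \<phi> (xs k)) \<longlonglongrightarrow> \<phi> x \<and>
       vs \<longlonglongrightarrow> v \<and> (\<forall>k. vs k \<in> frechet_subdiff \<phi> (xs k))}"

text \<open>Second subderivative \<open>d\<^sup>2\<phi>(x|v)(w)\<close> (Rockafellar--Wets, Def. 13.3).\<close>
definition second_subderiv :: "('n::finite vec \<Rightarrow> ereal) \<Rightarrow> 'n vec \<Rightarrow> 'n vec \<Rightarrow> 'n vec \<Rightarrow> ereal" where
  "second_subderiv \<phi> x v w = Liminf (at_right 0 \<times>\<^sub>F nhds w)
      (\<lambda>(\<tau>::real, w'). (\<phi> (x + \<tau> *\<^sub>R w') - ereal (real_of_ereal (\<phi> x) + \<tau> * (v \<bullet> w')))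
                         * ereal (2 / \<tau>\<^sup>2))"

definition second_order_stationary :: "('n::finite vec \<Rightarrow> ereal) \<Rightarrow> 'n vec \<Rightarrow> bool" where
  "second_order_stationary \<phi> x \<longleftrightarrow>
     0 \<in> limiting_subdiff \<phi> x \<and> (\<forall>d. second_subderiv \<phi> x 0 d \<ge> 0)"

text \<open>\<open>ntra_run f G H g \<gamma> \<delta>0 \<mu>1 \<mu>2 c1 c2 c3 x d \<delta> P\<close>: the sequences \<open>x\<close> (iterates),
  \<open>d\<close> (trial steps), \<open>\<delta>\<close> (radii), \<open>P\<close> (selected Clarke Jacobians) are generated by NTRA
  with gradient \<open>G\<close> and Hessian \<open>H\<close> of \<open>f\<close>.\<close>

definition ntra_Q :: "('n::finite vec \<Rightarrow> 'n mat) \<Rightarrow> real \<Rightarrow> 'n vec \<Rightarrow> 'n mat" where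
  "ntra_Q H \<gamma> x = mat 1 - \<gamma> *\<^sub>R H x"

definition ntra_B :: "('n::finite vec \<Rightarrow> 'n mat) \<Rightarrow> real \<Rightarrow> 'n vec \<Rightarrow> 'n mat \<Rightarrow> 'n mat" where
  "ntra_B H \<gamma> x P = (1 / \<gamma>) *\<^sub>R (ntra_Q H \<gamma> x ** (mat 1 - P ** ntra_Q H \<gamma> x))"

definition ntra_model :: "('n::finite vec \<Rightarrow> real) \<Rightarrow> ('n vec \<Rightarrow> 'n vec) \<Rightarrow> ('n vec \<Rightarrow> ereal)
     \<Rightarrow> real \<Rightarrow> 'n vec \<Rightarrow> 'n mat \<Rightarrow> 'n vec \<Rightarrow> real" where
  "ntra_model f G g \<gamma> x B d =
     fbe f G g \<gamma> x + grad (fbe f G g \<gamma>) x \<bullet> d + 1 / 2 * (d \<bullet> (B *v d))"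

definition ntra_run ::
  "('n::finite vec \<Rightarrow> real) \<Rightarrow> ('n vec \<Rightarrow> 'n vec) \<Rightarrow> ('n vec \<Rightarrow> 'n mat) \<Rightarrow> ('n vec \<Rightarrow> ereal)
   \<Rightarrow> real \<Rightarrow> real \<Rightarrow> real \<Rightarrow> real \<Rightarrow> real \<Rightarrow> real \<Rightarrow> real
   \<Rightarrow> (nat \<Rightarrow> 'n vec) \<Rightarrow> (nat \<Rightarrow> 'n vec) \<Rightarrow> (nat \<Rightarrow> real) \<Rightarrow> (nat \<Rightarrow> 'n mat) \<Rightarrow> bool" where
  "ntra_run f G H g \<gamma> \<delta>0 \<mu>1 \<mu>2 c1 c2 c3 x d \<delta> P \<longleftrightarrow>
     \<delta> 0 = \<delta>0 \<and>
     (\<forall>k. let B = ntra_B H \<gamma> (x k) (P k);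
              m = ntra_model f G g \<gamma> (x k) B;
              \<phi>\<gamma> = fbe f G g \<gamma>;
              r = (\<phi>\<gamma> (x k) - \<phi>\<gamma> (x k + d k)) / (m 0 - m (d k))
          in P k \<in> clarke_jac (prox g \<gamma>) (x k - \<gamma> *\<^sub>R G (x k)) \<and>
             norm (d k) \<le> \<delta> k \<and>
             x (Suc k) = (if r < \<mu>1 then x k else x k + d k) \<and>
             \<delta> (Suc k) = (if r < \<mu>1 then c1 * \<delta> k
                           else if r < \<mu>2 then c2 * \<delta> k else c3 * \<delta> k))"

end

theory Submission
  imports Defs
begin

text \<open>
  Near the critical point \<open>x\<^sup>\<star>\<close> the proximal map is \<open>C\<^sup>1\<close>, so the forward-backward envelope
  \<open>\<phi>\<^sub>\<gamma>\<close> is \<open>C\<^sup>2\<close> with gradient \<open>Q R\<^sub>\<gamma>\<close>; as \<open>R\<^sub>\<gamma>(x\<^sup>\<star>) = 0\<close>, its Hessian at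
  \<open>x\<^sup>\<star>\<close> is \<open>B(x\<^sup>\<star>) = \<gamma>\<^sup>-\<^sup>1 Q (I - P Q)\<close>, and eventually \<open>B\<^sub>k = B(x\<^sub>k)\<close> because the
  Clarke Jacobian of a \<open>C\<^sup>1\<close> map is a singleton. If \<open>B(x\<^sup>\<star>)\<close> had a direction of negative
  curvature, \<open>lambda_min (B\<^sub>k)\<close> would stay below some \<open>-c < 0\<close>, and the hypothesis on the
  steps would make the predicted decrease at least \<open>\<beta>\<^sub>2 c \<delta>\<^sub>k\<^sup>2\<close>. Taylor's theorem then makes
  every short step very successful, while long steps are rejected because consecutive iterates
  approach each other; so \<open>\<delta>\<^sub>k\<close>, and with it the predicted decrease, stays bounded away
  from 0. But accepted steps and \<open>\<nabla>\<phi>\<^sub>\<gamma>(x\<^sub>k)\<close> tend to 0, so their predicted decrease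
  does too; hence eventually every step is rejected and \<open>\<delta>\<^sub>k \<rightarrow> 0\<close>, a contradiction.
  Finally \<open>\<phi>\<^sub>\<gamma> \<le> \<phi>\<close> with equality at \<open>x\<^sup>\<star>\<close>, so the expansion of \<open>\<phi>\<^sub>\<gamma>\<close> with zero
  gradient and positive semidefinite Hessian gives \<open>\<phi>(x\<^sup>\<star> + h) \<ge> \<phi>(x\<^sup>\<star>) - o(|h|\<^sup>2)\<close>,
  which yields first- and second-order stationarity.
\<close>

section \<open>Matrices, second derivatives and eigenvalues\<close>

lemma norm_matrix_vector_mult_le:
  fixes A :: "real^'n^'m"
  shows "norm (A *v x) \<le> norm A * norm x"
proof -
  have row: "\<bar>(A *v x) $ i\<bar> \<le> norm (A $ i) * norm x" for i
    by (simp add: matrix_mult_dot Cauchy_Schwarz_ineq2)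
  have "norm (A *v x) = L2_set (\<lambda>i. norm ((A *v x) $ i)) UNIV"
    by (simp add: norm_vec_def)
  also have "\<dots> \<le> L2_set (\<lambda>i. norm (A $ i) * norm x) UNIV"
    by (rule L2_set_mono) (use row in auto)
  also have "\<dots> = norm x * L2_set (\<lambda>i. norm (A $ i)) UNIV"
    by (subst L2_set_right_distrib) (auto simp: mult.commute)
  also have "\<dots> = norm A * norm x"
    by (simp add: norm_vec_def[of A] mult.commute)
  finally show ?thesis .
qed

lemma bounded_bilinear_matrix_vector_mult:
  "bounded_bilinear (\<lambda>(A::real^'n^'m) (x::real^'n). A *v x)"
proof
  fix a a' :: "real^'n^'m" and b b' :: "real^'n" and r :: real
  show "(a + a') *v b = a *v b + a' *v b" by (simp add: matrix_vector_mult_add_rdistrib)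
  show "a *v (b + b') = a *v b + a *v b'" by (simp add: matrix_vector_right_distrib)
  show "(r *\<^sub>R a) *v b = r *\<^sub>R (a *v b)" by (simp add: scaleR_matrix_vector_assoc)
  show "a *v (r *\<^sub>R b) = r *\<^sub>R (a *v b)" by (simp add: matrix_vector_mult_scaleR)
  show "\<exists>K. \<forall>a b. norm ((a::real^'n^'m) *v (b::real^'n)) \<le> norm a * norm b * K"
    by (rule exI[of _ 1]) (simp add: norm_matrix_vector_mult_le)
qed

lemma quadratic_form_diff_le:
  fixes A M :: "real^'n^'n"
  shows "\<bar>d \<bullet> ((A - M) *v d)\<bar> \<le> norm (A - M) * (norm d)\<^sup>2"
proof -
  have "\<bar>d \<bullet> ((A - M) *v d)\<bar> \<le> norm d * norm ((A - M) *v d)"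
    by (rule Cauchy_Schwarz_ineq2)
  also have "\<dots> \<le> norm d * (norm (A - M) * norm d)"
    by (intro mult_left_mono norm_matrix_vector_mult_le) auto
  finally show ?thesis by (simp add: power2_eq_square algebra_simps)
qed

lemma tendsto_matrix_matrix_mult:
  fixes A :: "'a \<Rightarrow> real^'n^'m" and B :: "'a \<Rightarrow> real^'k^'n"
  assumes "(A \<longlongrightarrow> a) F" "(B \<longlongrightarrow> b) F"
  shows "((\<lambda>x. A x ** B x) \<longlongrightarrow> a ** b) F"
  unfolding matrix_matrix_mult_def by (intro tendsto_intros assms)

lemma matrix_blinfun_apply:
  fixes L :: "(real^'n) \<Rightarrow>\<^sub>L (real^'m)"
  shows "matrix (blinfun_apply L) *v h = blinfun_apply L h"
  using matrix_vector_mul(3)[OF blinfun.bounded_linear_right[of L]] by metis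

lemma tendsto_matrix_blinfun:
  fixes L :: "'a \<Rightarrow> (real^'n) \<Rightarrow>\<^sub>L (real^'m)"
  assumes "(L \<longlongrightarrow> l) F"
  shows "((\<lambda>x. matrix (blinfun_apply (L x))) \<longlongrightarrow> matrix (blinfun_apply l)) F"
  unfolding matrix_def by (intro tendsto_intros blinfun.tendsto assms)

lemma isCont_tendsto_nhds: "isCont f a \<Longrightarrow> (f \<longlongrightarrow> f a) (nhds a)"
  by (simp add: isCont_def tendsto_at_iff_tendsto_nhds)

lemma gradI:
  fixes F :: "real^'n \<Rightarrow> real"
  assumes "(F has_derivative (\<lambda>h. v \<bullet> h)) (at x)"
  shows "grad F x = v"
  unfolding grad_def
proof (rule the_equality)
  show "(F has_derivative (\<lambda>h. v \<bullet> h)) (at x)" by fact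
  fix w assume "(F has_derivative (\<lambda>h. w \<bullet> h)) (at x)"
  then have "(\<lambda>h. w \<bullet> h) = (\<lambda>h. v \<bullet> h)" using has_derivative_unique assms by blast
  then have "w \<bullet> (w - v) = v \<bullet> (w - v)" by metis
  then have "(w - v) \<bullet> (w - v) = 0" by (simp add: inner_diff_left)
  then show "w = v" by simp
qed

lemma mixed_difference_mvt:
  fixes F :: "'a::real_inner \<Rightarrow> real"
  assumes dF: "\<And>z. z \<in> S \<Longrightarrow> (F has_derivative (\<lambda>h. Gr z \<bullet> h)) (at z)"
    and t: "0 < t"
    and inS: "\<And>s. 0 \<le> s \<Longrightarrow> s \<le> t \<Longrightarrow> y + s *\<^sub>R u + t *\<^sub>R v \<in> S \<and> y + s *\<^sub>R u \<in> S"
  obtains z where "0 < z" "z < t"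
    "F (y + t *\<^sub>R u + t *\<^sub>R v) - F (y + t *\<^sub>R u) - F (y + t *\<^sub>R v) + F y
       = t * ((Gr (y + z *\<^sub>R u + t *\<^sub>R v) - Gr (y + z *\<^sub>R u)) \<bullet> u)"
proof -
  define \<phi> where "\<phi> s = F (y + s *\<^sub>R u + t *\<^sub>R v) - F (y + s *\<^sub>R u)" for s
  define \<phi>' where "\<phi>' s = (Gr (y + s *\<^sub>R u + t *\<^sub>R v) - Gr (y + s *\<^sub>R u)) \<bullet> u" for s
  have "(\<phi> has_real_derivative \<phi>' s) (at s)" if "0 \<le> s" "s \<le> t" for s
  proof -
    have "((\<lambda>s. F (y + s *\<^sub>R u + t *\<^sub>R v)) has_derivative
        (\<lambda>h. Gr (y + s *\<^sub>R u + t *\<^sub>R v) \<bullet> (h *\<^sub>R u))) (at s)"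
      by (rule has_derivative_compose[of "\<lambda>s. y + s *\<^sub>R u + t *\<^sub>R v", OF _ dF])
        (use inS[OF that] in \<open>auto intro!: derivative_eq_intros\<close>)
    moreover have "((\<lambda>s. F (y + s *\<^sub>R u)) has_derivative (\<lambda>h. Gr (y + s *\<^sub>R u) \<bullet> (h *\<^sub>R u))) (at s)"
      by (rule has_derivative_compose[of "\<lambda>s. y + s *\<^sub>R u", OF _ dF])
        (use inS[OF that] in \<open>auto intro!: derivative_eq_intros\<close>)
    ultimately have "(\<phi> has_derivative (\<lambda>h. Gr (y + s *\<^sub>R u + t *\<^sub>R v) \<bullet> (h *\<^sub>R u)
        - Gr (y + s *\<^sub>R u) \<bullet> (h *\<^sub>R u))) (at s)"
      unfolding \<phi>_def by (intro derivative_intros)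
    moreover have "(\<lambda>h. Gr (y + s *\<^sub>R u + t *\<^sub>R v) \<bullet> (h *\<^sub>R u) - Gr (y + s *\<^sub>R u) \<bullet> (h *\<^sub>R u))
        = (\<lambda>h. \<phi>' s * h)"
      unfolding \<phi>'_def by (auto simp: inner_diff_left algebra_simps)
    ultimately show ?thesis by (simp add: has_field_derivative_def)
  qed
  then obtain z where "0 < z" "z < t" "\<phi> t - \<phi> 0 = (t - 0) * \<phi>' z"
    using MVT2[of 0 t \<phi> \<phi>'] t by auto
  then show ?thesis
    by (intro that[of z]) (auto simp: \<phi>_def \<phi>'_def algebra_simps)
qed

lemma gradient_increment_bound:
  fixes Gr :: "real^'n \<Rightarrow> real^'n" and A :: "real^'n^'n"
  assumes dG: "(Gr has_derivative (\<lambda>h. A *v h)) (at y)" and e: "e > 0"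
  obtains \<delta> where "\<delta> > 0" "\<And>w1 w2. norm w1 < \<delta> \<Longrightarrow> norm w2 < \<delta> \<Longrightarrow>
    norm (Gr (y + w1) - Gr (y + w2) - A *v (w1 - w2)) \<le> e * (norm w1 + norm w2)"
proof -
  obtain \<delta> where \<delta>: "\<delta> > 0"
    and lin: "\<And>w. norm w < \<delta> \<Longrightarrow> norm (Gr (y + w) - Gr y - A *v w) \<le> e * norm w"
    using dG e unfolding has_derivative_at_alt by (metis add_diff_cancel_left')
  show ?thesis
  proof (rule that[OF \<delta>])
    fix w1 w2 :: "real^'n" assume "norm w1 < \<delta>" "norm w2 < \<delta>"
    moreover have "Gr (y + w1) - Gr (y + w2) - A *v (w1 - w2)
        = (Gr (y + w1) - Gr y - A *v w1) - (Gr (y + w2) - Gr y - A *v w2)"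
      by (simp add: matrix_vector_mult_diff_distrib)
    ultimately show "norm (Gr (y + w1) - Gr (y + w2) - A *v (w1 - w2)) \<le> e * (norm w1 + norm w2)"
      using lin[of w1] lin[of w2] norm_triangle_ineq4 by (smt (verit) distrib_left)
  qed
qed

lemma norm_scaleR_add_scaleR_le:
  assumes "0 \<le> s" "s \<le> t"
  shows "norm (s *\<^sub>R u + t *\<^sub>R v) \<le> t * (norm u + norm v)" "norm (s *\<^sub>R u) \<le> t * (norm u + norm v)"
proof -
  have "norm (s *\<^sub>R u) \<le> t * norm u" using assms by (simp add: mult_right_mono)
  moreover have "norm (t *\<^sub>R v) = t * norm v" using assms by simp
  ultimately show "norm (s *\<^sub>R u + t *\<^sub>R v) \<le> t * (norm u + norm v)" "norm (s *\<^sub>R u) \<le> t * (norm u + norm v)"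
    using norm_triangle_ineq[of "s *\<^sub>R u" "t *\<^sub>R v"] assms
    by (simp_all add: distrib_left add_increasing2)
qed

lemma mixed_difference_approx:
  fixes F :: "real^'n \<Rightarrow> real" and Gr :: "real^'n \<Rightarrow> real^'n" and A :: "real^'n^'n"
  assumes r: "r > 0" and dF: "\<And>z. z \<in> ball y r \<Longrightarrow> (F has_derivative (\<lambda>h. Gr z \<bullet> h)) (at z)"
    and dG: "(Gr has_derivative (\<lambda>h. A *v h)) (at y)"
    and e: "e > 0"
  shows "\<exists>t0>0. \<forall>t. 0 < t \<and> t < t0 \<longrightarrow>
     \<bar>F (y + t *\<^sub>R u + t *\<^sub>R v) - F (y + t *\<^sub>R u) - F (y + t *\<^sub>R v) + F y - t\<^sup>2 * (u \<bullet> (A *v v))\<bar>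
       \<le> e * t\<^sup>2"
proof -
  define \<nu> where "\<nu> = norm u + norm v"
  define K where "K = 2 * \<nu> * norm u + 1"
  have K: "K > 0" unfolding K_def \<nu>_def by (simp add: add_nonneg_pos)
  obtain \<delta> where \<delta>: "\<delta> > 0" and lin: "\<And>w1 w2. norm w1 < \<delta> \<Longrightarrow> norm w2 < \<delta> \<Longrightarrow>
      norm (Gr (y + w1) - Gr (y + w2) - A *v (w1 - w2)) \<le> e / K * (norm w1 + norm w2)"
    using gradient_increment_bound[OF dG] e K by (metis divide_pos_pos)
  note seg = norm_scaleR_add_scaleR_le[of _ _ u v, folded \<nu>_def]
  define t0 where "t0 = min \<delta> r / (\<nu> + 1)"
  have t0: "t0 > 0" using \<delta> r unfolding t0_def \<nu>_def by (simp add: add_nonneg_pos)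
  show ?thesis
  proof (intro exI[of _ t0] conjI allI impI t0)
    fix t :: real assume t: "0 < t \<and> t < t0"
    have "t * \<nu> \<le> t * (\<nu> + 1)" using t by simp
    also have "\<dots> < min \<delta> r" using t unfolding t0_def \<nu>_def by (simp add: add_nonneg_pos pos_less_divide_eq)
    finally have t\<nu>: "t * \<nu> < min \<delta> r" .
    obtain z where z: "0 < z" "z < t" and mvt:
      "F (y + t *\<^sub>R u + t *\<^sub>R v) - F (y + t *\<^sub>R u) - F (y + t *\<^sub>R v) + F y
         = t * ((Gr (y + z *\<^sub>R u + t *\<^sub>R v) - Gr (y + z *\<^sub>R u)) \<bullet> u)"
    proof (rule mixed_difference_mvt[of "ball y r" F Gr t y u v])
      fix s :: real assume s: "0 \<le> s" "s \<le> t"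
      have dy: "dist y (y + w) = norm w" for w :: "real^'n" by (simp add: dist_norm)
      show "y + s *\<^sub>R u + t *\<^sub>R v \<in> ball y r \<and> y + s *\<^sub>R u \<in> ball y r"
        unfolding mem_ball add.assoc dy using seg[OF s] t\<nu> by simp
    qed (use dF t in auto)
    define w where "w = Gr (y + z *\<^sub>R u + t *\<^sub>R v) - Gr (y + z *\<^sub>R u) - A *v (t *\<^sub>R v)"
    have "norm w \<le> e / K * (norm (z *\<^sub>R u + t *\<^sub>R v) + norm (z *\<^sub>R u))"
      using lin[of "z *\<^sub>R u + t *\<^sub>R v" "z *\<^sub>R u"] seg[of z t] z t\<nu> unfolding w_def
      by (simp add: add.assoc)
    also have "\<dots> \<le> e / K * (2 * t * \<nu>)"
      using seg[of z t] z e K by (intro mult_left_mono) auto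
    finally have "\<bar>w \<bullet> u\<bar> \<le> e / K * (2 * t * \<nu>) * norm u"
      using Cauchy_Schwarz_ineq2[of w u] by (smt (verit) mult_right_mono norm_ge_zero)
    also have "\<dots> = e * t * ((2 * \<nu> * norm u) / K)" by (simp add: field_simps)
    also have "\<dots> \<le> e * t * 1" using K e t by (intro mult_left_mono) (auto simp: K_def)
    finally have wu: "\<bar>w \<bullet> u\<bar> \<le> e * t" by simp
    have "F (y + t *\<^sub>R u + t *\<^sub>R v) - F (y + t *\<^sub>R u) - F (y + t *\<^sub>R v) + F y - t\<^sup>2 * (u \<bullet> (A *v v))
        = t * (w \<bullet> u)"
      unfolding mvt w_def
      by (simp add: matrix_vector_mult_scaleR power2_eq_square inner_diff_left inner_commute algebra_simps)
    also have "\<bar>\<dots>\<bar> \<le> e * t\<^sup>2"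
      using wu t by (simp add: abs_mult power2_eq_square mult_left_mono mult.assoc)
    finally show "\<bar>F (y + t *\<^sub>R u + t *\<^sub>R v) - F (y + t *\<^sub>R u) - F (y + t *\<^sub>R v) + F y
        - t\<^sup>2 * (u \<bullet> (A *v v))\<bar> \<le> e * t\<^sup>2" .
  qed
qed

lemma derivative_of_gradient_symmetric:
  fixes F :: "real^'n \<Rightarrow> real" and Gr :: "real^'n \<Rightarrow> real^'n" and A :: "real^'n^'n"
  assumes r: "r > 0" and dF: "\<And>z. z \<in> ball y r \<Longrightarrow> (F has_derivative (\<lambda>h. Gr z \<bullet> h)) (at z)"
    and dG: "(Gr has_derivative (\<lambda>h. A *v h)) (at y)"
  shows "u \<bullet> (A *v v) = v \<bullet> (A *v u)"
proof (rule ccontr)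
  assume ne: "u \<bullet> (A *v v) \<noteq> v \<bullet> (A *v u)"
  define e where "e = \<bar>u \<bullet> (A *v v) - v \<bullet> (A *v u)\<bar> / 4"
  have e: "e > 0" using ne unfolding e_def by simp
  define X where "X t = F (y + t *\<^sub>R u + t *\<^sub>R v) - F (y + t *\<^sub>R u) - F (y + t *\<^sub>R v) + F y" for t
  have sw: "y + t *\<^sub>R v + t *\<^sub>R u = y + t *\<^sub>R u + t *\<^sub>R v" for t by (simp add: algebra_simps)
  obtain t1 where t1: "t1 > 0" and h1: "\<And>t. 0 < t \<and> t < t1 \<Longrightarrow> \<bar>X t - t\<^sup>2 * (u \<bullet> (A *v v))\<bar> \<le> e * t\<^sup>2"
    using mixed_difference_approx[OF r dF dG e, of u v] unfolding X_def by blast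
  obtain t2 where t2: "t2 > 0" and h2: "\<And>t. 0 < t \<and> t < t2 \<Longrightarrow> \<bar>X t - t\<^sup>2 * (v \<bullet> (A *v u))\<bar> \<le> e * t\<^sup>2"
    using mixed_difference_approx[OF r dF dG e, of v u] unfolding X_def sw by (auto simp: algebra_simps)
  define t where "t = min t1 t2 / 2"
  have t: "0 < t" "t < t1" "t < t2" using t1 t2 unfolding t_def by auto
  have "t\<^sup>2 * \<bar>u \<bullet> (A *v v) - v \<bullet> (A *v u)\<bar> = \<bar>(X t - t\<^sup>2 * (v \<bullet> (A *v u))) - (X t - t\<^sup>2 * (u \<bullet> (A *v v)))\<bar>"
    by (simp add: abs_mult abs_minus_commute flip: right_diff_distrib)
  also have "\<dots> \<le> e * t\<^sup>2 + e * t\<^sup>2"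
    using h1[of t] h2[of t] t abs_triangle_ineq4 by (smt (verit))
  also have "\<dots> = t\<^sup>2 * (2 * e)" by simp
  finally have "\<bar>u \<bullet> (A *v v) - v \<bullet> (A *v u)\<bar> \<le> 2 * e"
    using t by (simp add: mult_le_cancel_left_pos)
  then show False using e unfolding e_def by simp
qed


lemma segment_linearization_bound:
  fixes \<Psi> :: "'a::real_normed_vector \<Rightarrow> 'b::real_normed_vector"
  assumes S: "convex S" "x \<in> S" "x + d \<in> S" "p \<in> S"
    and d\<Psi>: "\<And>z. z \<in> S \<Longrightarrow> (\<Psi> has_derivative \<Psi>' z) (at z)"
    and close: "\<And>z. z \<in> S \<Longrightarrow> onorm (\<lambda>h. \<Psi>' z h - \<Psi>' p h) \<le> e"
    and t: "0 \<le> t" "t \<le> 1"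
  shows "norm (\<Psi> (x + t *\<^sub>R d) - \<Psi> x - \<Psi>' p (t *\<^sub>R d)) \<le> t * norm d * e"
proof -
  have "norm (\<Psi> (x + t *\<^sub>R d) - \<Psi> x - \<Psi>' p (x + t *\<^sub>R d - x)) \<le> norm (x + t *\<^sub>R d - x) * e"
  proof (rule differentiable_bound_linearization[where S = S and f' = \<Psi>'])
    fix s :: real assume "s \<in> {0..1}"
    then have "0 \<le> s * t" "s * t \<le> 1" using t by (auto simp: mult_le_one)
    then show "x + s *\<^sub>R (x + t *\<^sub>R d - x) \<in> S"
      using convexD_alt[OF S(1,2,3)] by (simp add: algebra_simps)
  next
    show "(\<Psi> has_derivative \<Psi>' z) (at z within S)" if "z \<in> S" for z
      using d\<Psi>[OF that] by (rule has_derivative_at_withinI)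
    show "onorm (\<Psi>' z - \<Psi>' p) \<le> e" if "z \<in> S" for z
      using close[OF that] by (simp add: fun_diff_def)
  qed (use S in auto)
  then show ?thesis using t by simp
qed

lemma second_order_taylor_bound:
  fixes \<phi> :: "real^'n \<Rightarrow> real" and \<Psi> :: "real^'n \<Rightarrow> real^'n"
  assumes S: "convex S" "x \<in> S" "x + d \<in> S" "p \<in> S"
    and d\<phi>: "\<And>z. z \<in> S \<Longrightarrow> (\<phi> has_derivative (\<lambda>h. \<Psi> z \<bullet> h)) (at z)"
    and d\<Psi>: "\<And>z. z \<in> S \<Longrightarrow> (\<Psi> has_derivative \<Psi>' z) (at z)"
    and close: "\<And>z. z \<in> S \<Longrightarrow> onorm (\<lambda>h. \<Psi>' z h - \<Psi>' p h) \<le> e"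
    and A: "\<And>h. \<Psi>' p h = A *v h" and AM: "norm (A - M) \<le> e"
  shows "\<bar>\<phi> (x + d) - \<phi> x - \<Psi> x \<bullet> d - 1/2 * (d \<bullet> (M *v d))\<bar> \<le> 2 * e * (norm d)\<^sup>2"
proof -
  have seg: "x + t *\<^sub>R d \<in> S" if "0 \<le> t" "t \<le> 1" for t
    using convexD_alt[OF S(1,2,3) that] by (simp add: algebra_simps)
  have lin: "norm (\<Psi> (x + t *\<^sub>R d) - \<Psi> x - A *v (t *\<^sub>R d)) \<le> t * norm d * e"
    if "0 \<le> t" "t \<le> 1" for t
    using segment_linearization_bound[OF S d\<Psi> close that] by (simp add: A)
  define s where "s t = \<phi> (x + t *\<^sub>R d) - t * (\<Psi> x \<bullet> d) - t\<^sup>2 / 2 * (d \<bullet> (M *v d))" for t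
  define s' where "s' t = \<Psi> (x + t *\<^sub>R d) \<bullet> d - \<Psi> x \<bullet> d - t * (d \<bullet> (M *v d))" for t
  have "(s has_real_derivative s' t) (at t)" if "0 \<le> t" "t \<le> 1" for t
  proof -
    have "((\<lambda>t. \<phi> (x + t *\<^sub>R d)) has_derivative (\<lambda>h. \<Psi> (x + t *\<^sub>R d) \<bullet> (h *\<^sub>R d))) (at t)"
      by (rule has_derivative_compose[of "\<lambda>t. x + t *\<^sub>R d", OF _ d\<phi>[OF seg[OF that]]])
        (auto intro!: derivative_eq_intros)
    then have "(s has_derivative (\<lambda>h. \<Psi> (x + t *\<^sub>R d) \<bullet> (h *\<^sub>R d) - h * (\<Psi> x \<bullet> d)
        - (2 * t * h) / 2 * (d \<bullet> (M *v d)))) (at t)"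
      unfolding s_def[abs_def] by (auto intro!: derivative_eq_intros simp: power2_eq_square)
    moreover have "(\<lambda>h. \<Psi> (x + t *\<^sub>R d) \<bullet> (h *\<^sub>R d) - h * (\<Psi> x \<bullet> d) - (2 * t * h) / 2 * (d \<bullet> (M *v d)))
        = (\<lambda>h. s' t * h)"
      unfolding s'_def by (auto simp: algebra_simps)
    ultimately show ?thesis by (simp add: has_field_derivative_def)
  qed
  then obtain \<xi> where \<xi>: "0 < \<xi>" "\<xi> < 1" and mvt: "s 1 - s 0 = (1 - 0) * s' \<xi>"
    using MVT2[of 0 1 s s'] by auto
  have "s' \<xi> = (\<Psi> (x + \<xi> *\<^sub>R d) - \<Psi> x - A *v (\<xi> *\<^sub>R d)) \<bullet> d + \<xi> * (d \<bullet> ((A - M) *v d))"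
    unfolding s'_def by (simp add: inner_diff_left inner_diff_right matrix_vector_mult_diff_rdistrib
        matrix_vector_mult_scaleR inner_commute algebra_simps)
  moreover have "\<bar>(\<Psi> (x + \<xi> *\<^sub>R d) - \<Psi> x - A *v (\<xi> *\<^sub>R d)) \<bullet> d\<bar> \<le> e * (norm d)\<^sup>2"
  proof -
    have "\<bar>(\<Psi> (x + \<xi> *\<^sub>R d) - \<Psi> x - A *v (\<xi> *\<^sub>R d)) \<bullet> d\<bar> \<le> (\<xi> * norm d * e) * norm d"
      using Cauchy_Schwarz_ineq2 lin[of \<xi>] \<xi> by (smt (verit) mult_right_mono norm_ge_zero)
    also have "\<dots> \<le> (norm d * e) * norm d"
      using \<xi> close[OF S(4)] by (intro mult_right_mono) (auto simp: mult_left_le_one_le onorm_zero)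
    finally show ?thesis by (simp add: power2_eq_square algebra_simps)
  qed
  moreover have "\<bar>\<xi> * (d \<bullet> ((A - M) *v d))\<bar> \<le> e * (norm d)\<^sup>2"
  proof -
    have "\<bar>d \<bullet> ((A - M) *v d)\<bar> \<le> e * (norm d)\<^sup>2"
      using quadratic_form_diff_le[of d A M] mult_right_mono[OF AM, of "(norm d)\<^sup>2"] by simp
    then have "\<bar>\<xi>\<bar> * \<bar>d \<bullet> ((A - M) *v d)\<bar> \<le> 1 * (e * (norm d)\<^sup>2)"
      using \<xi> by (intro mult_mono) auto
    then show ?thesis by (simp add: abs_mult)
  qed
  moreover have "\<phi> (x + d) - \<phi> x - \<Psi> x \<bullet> d - 1/2 * (d \<bullet> (M *v d)) = s 1 - s 0"
    unfolding s_def by simp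
  ultimately show ?thesis using mvt by (simp add: abs_le_iff)
qed

lemma finite_eigenvalues_symmetric:
  fixes B :: "real^'n^'n"
  assumes sym: "\<And>u v. u \<bullet> (B *v v) = v \<bullet> (B *v u)"
  shows "finite {l. \<exists>v. v \<noteq> 0 \<and> B *v v = l *\<^sub>R v}"
proof -
  define E where "E = {l. \<exists>v. v \<noteq> 0 \<and> B *v v = l *\<^sub>R v}"
  define ev where "ev l = (SOME v. v \<noteq> 0 \<and> B *v v = l *\<^sub>R v)" for l
  have ev: "ev l \<noteq> 0 \<and> B *v ev l = l *\<^sub>R ev l" if "l \<in> E" for l
    using that unfolding E_def ev_def by (rule CollectE) (rule someI_ex)
  have inj: "inj_on ev E"
  proof (rule inj_onI)
    fix a b assume a: "a \<in> E" and b: "b \<in> E" and eq: "ev a = ev b"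
    have "a *\<^sub>R ev a = b *\<^sub>R ev a" using ev[OF a] ev[OF b] eq by metis
    then show "a = b" using ev[OF a] by simp
  qed
  have orth: "pairwise orthogonal (ev ` E)"
  proof (clarsimp simp: pairwise_def)
    fix a b assume a: "a \<in> E" and b: "b \<in> E" and ne: "ev a \<noteq> ev b"
    have "a * (ev b \<bullet> ev a) = ev b \<bullet> (B *v ev a)" using ev[OF a] by simp
    also have "\<dots> = ev a \<bullet> (B *v ev b)" by (rule sym)
    also have "\<dots> = b * (ev a \<bullet> ev b)" using ev[OF b] by simp
    finally have "(a - b) * (ev a \<bullet> ev b) = 0" by (simp add: inner_commute algebra_simps)
    moreover have "a \<noteq> b" using ne by auto
    ultimately show "orthogonal (ev a) (ev b)" by (simp add: orthogonal_def)
  qed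
  have "0 \<notin> ev ` E" using ev by auto
  then have "finite (ev ` E)"
    using orth pairwise_orthogonal_independent eucl.finiteI_independent by blast
  then show ?thesis using inj finite_image_iff unfolding E_def by blast
qed

lemma min_rayleigh_point_is_eigenvector:
  fixes B :: "real^'n^'n"
  assumes sym: "\<And>u v. u \<bullet> (B *v v) = v \<bullet> (B *v u)"
    and ge: "\<And>w. w \<bullet> (B *v w) \<ge> \<mu> * (w \<bullet> w)"
    and eq: "w0 \<bullet> (B *v w0) = \<mu> * (w0 \<bullet> w0)"
  shows "B *v w0 = \<mu> *\<^sub>R w0"
proof (rule ccontr)
  define h where "h w = w \<bullet> (B *v w) - \<mu> * (w \<bullet> w)" for w
  define z where "z = B *v w0 - \<mu> *\<^sub>R w0"
  assume "B *v w0 \<noteq> \<mu> *\<^sub>R w0"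
  then have zz: "z \<bullet> z > 0" unfolding z_def by simp
  have h0: "h w \<ge> 0" for w using ge[of w] unfolding h_def by simp
  have expand: "h (w0 + t *\<^sub>R z) = 2 * t * (z \<bullet> z) + t\<^sup>2 * h z" for t
  proof -
    have "h w0 = 0" using eq unfolding h_def by simp
    moreover have "w0 \<bullet> (B *v z) = z \<bullet> (B *v w0)" by (rule sym)
    ultimately show ?thesis unfolding h_def z_def
      by (simp add: matrix_vector_right_distrib matrix_vector_mult_scaleR inner_add_left
          inner_add_right inner_diff_left inner_diff_right inner_commute power2_eq_square algebra_simps)
  qed
  \<comment> \<open>moving from the minimiser \<open>w0\<close> against the residual \<open>z\<close> would decrease \<open>h\<close> below 0\<close>
  define t where "t = - (z \<bullet> z) / (h z + 1)"
  have quad: "2 * (- a / k) * a + (- a / k)\<^sup>2 * (k - 1) = a\<^sup>2 * (- k - 1) / k\<^sup>2"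
    if "k > 0" for a k :: real
    using that by (simp add: field_simps power2_eq_square)
  have "h (w0 + t *\<^sub>R z) = (z \<bullet> z)\<^sup>2 * (- h z - 2) / (h z + 1)\<^sup>2"
    unfolding expand t_def using quad[of "h z + 1" "z \<bullet> z"] h0[of z] by (simp add: algebra_simps)
  also have "\<dots> < 0" using zz h0[of z] by (intro divide_neg_pos mult_pos_neg) auto
  finally show False using h0 by (metis not_le)
qed

lemma symmetric_matrix_min_eigenvector:
  fixes B :: "real^'n^'n"
  assumes sym: "\<And>u v. u \<bullet> (B *v v) = v \<bullet> (B *v u)"
  obtains w0 \<mu> where "w0 \<noteq> 0" "B *v w0 = \<mu> *\<^sub>R w0" "\<And>w. w \<bullet> (B *v w) \<ge> \<mu> * (w \<bullet> w)"
proof -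
  define q where "q w = w \<bullet> (B *v w)" for w :: "real^'n"
  have "continuous_on (sphere 0 1) q" unfolding q_def by (intro continuous_intros)
  moreover have "sphere (0::real^'n) 1 \<noteq> {}" by simp
  ultimately obtain w0 where w0: "w0 \<in> sphere 0 1" and mn: "\<And>y. y \<in> sphere 0 1 \<Longrightarrow> q w0 \<le> q y"
    using continuous_attains_inf[OF compact_sphere] by blast
  have nw0: "norm w0 = 1" using w0 by simp
  have ge: "q w \<ge> q w0 * (w \<bullet> w)" for w
  proof (cases "w = 0")
    case True then show ?thesis by (simp add: q_def)
  next
    case False
    have "(1 / norm w) *\<^sub>R w \<in> sphere 0 1" using False by simp
    then have "q w0 \<le> q ((1 / norm w) *\<^sub>R w)" by (rule mn)
    also have "q ((1 / norm w) *\<^sub>R w) = q w / (norm w)\<^sup>2"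
      unfolding q_def by (simp add: matrix_vector_mult_scaleR power2_eq_square)
    finally show ?thesis using False by (simp add: pos_le_divide_eq power2_norm_eq_inner)
  qed
  have "w0 \<bullet> (B *v w0) = q w0 * (w0 \<bullet> w0)"
    using nw0 unfolding q_def by (simp add: power2_norm_eq_inner[symmetric])
  then have "B *v w0 = q w0 *\<^sub>R w0"
    using min_rayleigh_point_is_eigenvector[OF sym] ge unfolding q_def by blast
  moreover have "w0 \<noteq> 0" using nw0 by auto
  ultimately show ?thesis using that ge unfolding q_def by blast
qed

lemma lambda_min_le_rayleigh_quotient:
  fixes B :: "real^'n^'n"
  assumes sym: "\<And>u v. u \<bullet> (B *v v) = v \<bullet> (B *v u)" and v: "v \<noteq> 0"
  shows "lambda_min B \<le> (v \<bullet> (B *v v)) / (v \<bullet> v)"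
proof -
  obtain w0 \<mu> where w0: "w0 \<noteq> 0" "B *v w0 = \<mu> *\<^sub>R w0" and ge: "\<And>w. w \<bullet> (B *v w) \<ge> \<mu> * (w \<bullet> w)"
    using symmetric_matrix_min_eigenvector[OF sym] by blast
  have "\<mu> \<in> {l. \<exists>v. v \<noteq> 0 \<and> B *v v = l *\<^sub>R v}" using w0 by blast
  then have "lambda_min B \<le> \<mu>"
    unfolding lambda_min_def using finite_eigenvalues_symmetric[OF sym] by simp
  also have "\<mu> \<le> (v \<bullet> (B *v v)) / (v \<bullet> v)" using ge[of v] v by (simp add: pos_le_divide_eq)
  finally show ?thesis .
qed

section \<open>The proximal mapping of a weakly convex function\<close>

lemma prox_in_prox_set:
  assumes "prox_set g \<gamma> y \<noteq> {}"
  shows "prox g \<gamma> y \<in> prox_set g \<gamma> y"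
  using assms unfolding prox_def by (metis ex_in_conv someI_ex)

lemma prox_set_finite_value:
  assumes pr: "proper_fun g" and p: "p \<in> prox_set g \<gamma> y"
  shows "\<bar>g p\<bar> \<noteq> \<infinity>"
proof -
  obtain x where x: "g x \<noteq> \<infinity>" using pr unfolding proper_fun_def by auto
  have "g p + ereal ((norm (p - y))\<^sup>2 / (2 * \<gamma>)) \<le> g x + ereal ((norm (x - y))\<^sup>2 / (2 * \<gamma>))"
    using p unfolding prox_set_def by blast
  with x have "g p \<noteq> \<infinity>" by auto
  moreover have "g p \<noteq> -\<infinity>" using pr unfolding proper_fun_def by auto
  ultimately show ?thesis by auto
qed

lemma prox_set_le_real:
  assumes "p \<in> prox_set g \<gamma> y" "g p = ereal a" "g u = ereal b"
  shows "a + ((p - y) \<bullet> (p - y)) / (2 * \<gamma>) \<le> b + ((u - y) \<bullet> (u - y)) / (2 * \<gamma>)"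
proof -
  have "g p + ereal ((norm (p - y))\<^sup>2 / (2 * \<gamma>)) \<le> g u + ereal ((norm (u - y))\<^sup>2 / (2 * \<gamma>))"
    using assms(1) unfolding prox_set_def by blast
  then show ?thesis using assms(2,3) by (simp add: power2_norm_eq_inner)
qed

lemma prox_minorant_real:
  fixes p w y :: "'a::real_inner" and gp gu gz t \<rho> \<gamma> :: real
  assumes t: "0 < t" and \<gamma>: "\<gamma> > 0" and \<rho>: "\<rho> \<ge> 0"
    and convex: "gz + \<rho>/2 * ((p + t *\<^sub>R w) \<bullet> (p + t *\<^sub>R w))
      \<le> (1 - t) * (gp + \<rho>/2 * (p \<bullet> p)) + t * (gu + \<rho>/2 * ((p + w) \<bullet> (p + w)))"
    and opt: "gp + ((p - y) \<bullet> (p - y)) / (2 * \<gamma>)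
      \<le> gz + ((p + t *\<^sub>R w - y) \<bullet> (p + t *\<^sub>R w - y)) / (2 * \<gamma>)"
  shows "gu \<ge> gp + (w \<bullet> (y - p)) / \<gamma> - \<rho>/2 * (w \<bullet> w) - t * (w \<bullet> w) / (2 * \<gamma>)"
proof -
  define N where "N = w \<bullet> w"
  define c where "c = w \<bullet> (p - y)"
  have e1: "(p + t *\<^sub>R w) \<bullet> (p + t *\<^sub>R w) = p \<bullet> p + 2 * t * (w \<bullet> p) + t\<^sup>2 * N"
    and e2: "(p + w) \<bullet> (p + w) = p \<bullet> p + 2 * (w \<bullet> p) + N"
    unfolding N_def
    by (simp_all add: inner_add_left inner_add_right inner_commute power2_eq_square algebra_simps)
  have "(1 - t) * (gp + \<rho>/2 * (p \<bullet> p)) + t * (gu + \<rho>/2 * (p \<bullet> p + 2 * (w \<bullet> p) + N))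
      - \<rho>/2 * (p \<bullet> p + 2 * t * (w \<bullet> p) + t\<^sup>2 * N) = gp - t * gp + t * gu + \<rho>/2 * (t - t\<^sup>2) * N"
    by (simp add: field_simps power2_eq_square)
  then have A: "gz \<le> gp - t * gp + t * gu + \<rho>/2 * (t - t\<^sup>2) * N"
    using convex unfolding e1 e2 by linarith
  have "(p + t *\<^sub>R w - y) \<bullet> (p + t *\<^sub>R w - y) = (p - y) \<bullet> (p - y) + (2 * t * c + t\<^sup>2 * N)"
    unfolding N_def c_def
    by (simp add: inner_add_left inner_add_right inner_diff_left inner_diff_right inner_commute
        power2_eq_square algebra_simps)
  then have B: "gp \<le> gz + (2 * t * c + t\<^sup>2 * N) / (2 * \<gamma>)"
    using opt by (simp add: add_divide_distrib)
  have "t * (gu + \<rho>/2 * (1 - t) * N + c / \<gamma> + t * N / (2 * \<gamma>))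
      = t * gu + \<rho>/2 * (t - t\<^sup>2) * N + (2 * t * c + t\<^sup>2 * N) / (2 * \<gamma>)"
    using \<gamma> by (simp add: field_simps power2_eq_square)
  then have "t * gp \<le> t * (gu + \<rho>/2 * (1 - t) * N + c / \<gamma> + t * N / (2 * \<gamma>))"
    using A B by linarith
  then have "gp \<le> gu + \<rho>/2 * (1 - t) * N + c / \<gamma> + t * N / (2 * \<gamma>)"
    using t by simp
  moreover have "\<rho>/2 * t * N \<ge> 0" using t \<rho> unfolding N_def by simp
  moreover have "(w \<bullet> (y - p)) / \<gamma> = - (c / \<gamma>)" unfolding c_def by (simp add: inner_diff_right minus_divide_left)
  moreover have "\<rho>/2 * (1 - t) * N = \<rho>/2 * N - \<rho>/2 * t * N" by (simp add: field_simps)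
  ultimately show ?thesis unfolding N_def[symmetric] by linarith
qed

lemma weakly_convex_prox_minorant:
  fixes g :: "real^'n \<Rightarrow> ereal"
  assumes pr: "proper_fun g" and wc: "weakly_convex \<rho> g" and \<gamma>: "\<gamma> > 0" and \<rho>: "\<rho> \<ge> 0"
    and p: "p \<in> prox_set g \<gamma> y"
  shows "g u \<ge> ereal (real_of_ereal (g p) + ((u - p) \<bullet> (y - p)) / \<gamma> - \<rho>/2 * ((u - p) \<bullet> (u - p)))"
proof (cases "g u")
  case PInf then show ?thesis by simp
next
  case MInf then show ?thesis using pr unfolding proper_fun_def by auto
next
  case (real gu)
  define gp where "gp = real_of_ereal (g p)"
  have gp: "g p = ereal gp" using prox_set_finite_value[OF pr p] unfolding gp_def by (cases "g p") auto
  define w where "w = u - p"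
  define C where "C = (w \<bullet> w) / (2 * \<gamma>)"
  have C: "C \<ge> 0" unfolding C_def using \<gamma> by simp
  have step: "gu \<ge> gp + (w \<bullet> (y - p)) / \<gamma> - \<rho>/2 * (w \<bullet> w) - t * C" if t: "0 < t" "t < 1" for t
  proof -
    have "g ((1 - t) *\<^sub>R p + t *\<^sub>R u) + ereal (\<rho> / 2 * (norm ((1 - t) *\<^sub>R p + t *\<^sub>R u))\<^sup>2)
        \<le> ereal (1 - t) * (g p + ereal (\<rho> / 2 * (norm p)\<^sup>2)) + ereal t * (g u + ereal (\<rho> / 2 * (norm u)\<^sup>2))"
      using wc t unfolding weakly_convex_def econvex_def by blast
    moreover have "(1 - t) *\<^sub>R p + t *\<^sub>R u = p + t *\<^sub>R w" "u = p + w"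
      unfolding w_def by (simp_all add: algebra_simps)
    ultimately have cv: "g (p + t *\<^sub>R w) + ereal (\<rho> / 2 * ((p + t *\<^sub>R w) \<bullet> (p + t *\<^sub>R w)))
        \<le> ereal ((1 - t) * (gp + \<rho>/2 * (p \<bullet> p)) + t * (gu + \<rho>/2 * ((p + w) \<bullet> (p + w))))"
      using gp real by (simp add: power2_norm_eq_inner)
    moreover have "g (p + t *\<^sub>R w) \<noteq> -\<infinity>" using pr unfolding proper_fun_def by auto
    ultimately obtain gz where gz: "g (p + t *\<^sub>R w) = ereal gz" by (cases "g (p + t *\<^sub>R w)") auto
    have "gu \<ge> gp + (w \<bullet> (y - p)) / \<gamma> - \<rho>/2 * (w \<bullet> w) - t * (w \<bullet> w) / (2 * \<gamma>)"
    proof (rule prox_minorant_real[where gz = gz, OF t(1) \<gamma> \<rho>])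
      show "gz + \<rho>/2 * ((p + t *\<^sub>R w) \<bullet> (p + t *\<^sub>R w))
          \<le> (1 - t) * (gp + \<rho>/2 * (p \<bullet> p)) + t * (gu + \<rho>/2 * ((p + w) \<bullet> (p + w)))"
        using cv unfolding gz by simp
      show "gp + ((p - y) \<bullet> (p - y)) / (2 * \<gamma>) \<le> gz + ((p + t *\<^sub>R w - y) \<bullet> (p + t *\<^sub>R w - y)) / (2 * \<gamma>)"
        by (rule prox_set_le_real[OF p gp gz])
    qed
    then show ?thesis unfolding C_def by simp
  qed
  have "gu \<ge> gp + (w \<bullet> (y - p)) / \<gamma> - \<rho>/2 * (w \<bullet> w)"
  proof (rule field_le_epsilon)
    fix e :: real assume e: "e > 0"
    define t where "t = min (1/2) (e / (C + 1))"
    have t: "0 < t" "t < 1" unfolding t_def using e C by auto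
    have "t * C \<le> (e / (C + 1)) * C" unfolding t_def using C by (intro mult_right_mono) auto
    also have "\<dots> \<le> e" using e C by (simp add: field_simps)
    finally show "gp + (w \<bullet> (y - p)) / \<gamma> - \<rho>/2 * (w \<bullet> w) \<le> gu + e" using step[OF t] by linarith
  qed
  then show ?thesis unfolding real gp_def[symmetric] w_def by simp
qed

lemma closed_sublevel_lsc_add_continuous:
  fixes g :: "real^'n \<Rightarrow> ereal" and q :: "real^'n \<Rightarrow> real"
  assumes lsc: "lsc_fun g" and cq: "continuous_on UNIV q"
  shows "closed {u. g u + ereal (q u) \<le> ereal c}"
proof -
  have "open {u. ereal c < g u + ereal (q u)}"
  proof (subst open_subopen, intro ballI)
    fix u assume "u \<in> {u. ereal c < g u + ereal (q u)}"
    then have "ereal (c - q u) < g u" by (cases "g u") (auto simp: algebra_simps)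
    then obtain c1 where c1: "ereal (c - q u) < ereal c1" "ereal c1 < g u"
      using ereal_dense2 by blast
    have "eventually (\<lambda>z. ereal c1 < g z) (at u)"
      using lsc c1(2) le_Liminf_iff[of "g u" "at u" g] unfolding lsc_fun_def by blast
    then have ev1: "eventually (\<lambda>z. ereal c1 < g z) (nhds u)"
      using c1(2) unfolding eventually_at_filter by (auto elim: eventually_mono)
    have "isCont q u" using cq by (simp add: continuous_on_eq_continuous_at)
    then have "eventually (\<lambda>z. q z > c - c1) (nhds u)"
      using c1(1) by (intro order_tendstoD(1)) (auto simp: isCont_def continuous_at_imp_continuous_within
          tendsto_at_iff_tendsto_nhds)
    with ev1 have "eventually (\<lambda>z. ereal c < g z + ereal (q z)) (nhds u)"
    proof eventually_elim
      case (elim z)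
      then show ?case by (cases "g z") auto
    qed
    then show "\<exists>T. open T \<and> u \<in> T \<and> T \<subseteq> {u. ereal c < g u + ereal (q u)}"
      unfolding eventually_nhds by blast
  qed
  moreover have "- {u. ereal c < g u + ereal (q u)} = {u. g u + ereal (q u) \<le> ereal c}" by auto
  ultimately show ?thesis by (metis closed_Compl)
qed

lemma closed_sublevels_attains_min:
  fixes F :: "'a::heine_borel \<Rightarrow> ereal"
  assumes closed: "\<And>c. closed {u. F u \<le> ereal c}"
    and below: "\<And>u. ereal b \<le> F u" and u0: "F u0 = ereal M"
    and bounded: "bounded {u. F u \<le> ereal M}"
  obtains a where "\<And>u. F a \<le> F u"
proof -
  define m where "m = (INF u. F u)"
  have "m \<le> ereal M" unfolding m_def using u0 by (metis INF_lower UNIV_I)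
  moreover have "ereal b \<le> m" unfolding m_def using below by (simp add: le_INF_iff)
  ultimately obtain mr where mr: "m = ereal mr" "mr \<le> M" by (cases m) auto
  define S where "S n = {u. F u \<le> ereal M} \<inter> {u. F u \<le> ereal (mr + 1 / Suc n)}" for n :: nat
  have "\<exists>a. \<forall>n. a \<in> S n"
  proof (rule bounded_closed_nest[of S])
    show "closed (S n)" for n unfolding S_def by (intro closed_Int closed)
    show "S n \<noteq> {}" for n
    proof (cases "M \<le> mr + 1 / Suc n")
      case True
      then have "u0 \<in> S n" using u0 unfolding S_def by simp
      then show ?thesis by blast
    next
      case False
      have "m < ereal (mr + 1 / Suc n)" unfolding mr by simp
      then obtain u where u: "F u < ereal (mr + 1 / Suc n)" unfolding m_def by (auto simp: INF_less_iff)
      moreover have "ereal (mr + 1 / Suc n) \<le> ereal M" using False by simp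
      ultimately have "F u \<le> ereal M" by (meson less_imp_le order_trans)
      then have "u \<in> S n" using u unfolding S_def by auto
      then show ?thesis by blast
    qed
    show "S n \<subseteq> S k" if "k \<le> n" for k n
    proof -
      have "1 / real (Suc n) \<le> 1 / real (Suc k)" using that by (simp add: frac_le)
      then show ?thesis unfolding S_def by (auto elim: order_trans)
    qed
    show "bounded (S 0)" unfolding S_def by (rule bounded_subset[OF bounded]) auto
  qed blast
  then obtain a where a: "\<And>n. F a \<le> ereal (mr + 1 / Suc n)" unfolding S_def by force
  have "F a \<le> m"
  proof (rule ccontr)
    assume "\<not> F a \<le> m"
    then have lt: "ereal mr < F a" unfolding mr by simp
    moreover have "F a \<le> ereal (mr + 1)" using a[of 0] by simp
    ultimately obtain fa where fa: "F a = ereal fa" "mr < fa" by (cases "F a") auto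
    then obtain n :: nat where "1 / real (Suc n) < fa - mr"
      by (metis diff_gt_0_iff_gt nat_approx_posE)
    then show False using a[of n] fa by simp
  qed
  then show ?thesis using that unfolding m_def by (meson INF_lower UNIV_I order_trans)
qed

lemma quadratic_lower_bound:
  fixes \<kappa> A s :: real
  assumes "\<kappa> > 0"
  shows "\<kappa> * s\<^sup>2 - A * s \<ge> - A\<^sup>2 / (4 * \<kappa>)"
proof -
  have "0 \<le> (2 * \<kappa> * s - A)\<^sup>2" by simp
  then have "0 \<le> 4 * \<kappa> * (\<kappa> * s\<^sup>2 - A * s) + A\<^sup>2" by (simp add: power2_eq_square algebra_simps)
  then show ?thesis using assms by (simp add: field_simps)
qed

lemma quadratic_gt_beyond:
  fixes \<kappa> A c M s :: real
  assumes k: "\<kappa> > 0" and A: "A \<ge> 0" and s: "s > (A + \<bar>c\<bar> + \<bar>M\<bar> + 1) / \<kappa> + 1"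
  shows "\<kappa> * s\<^sup>2 - A * s - \<bar>c\<bar> > M"
proof -
  have s1: "s \<ge> 1" using s k A by (smt (verit) divide_nonneg_pos)
  have "\<kappa> * s > A + \<bar>c\<bar> + \<bar>M\<bar> + 1" using s k by (simp add: field_simps)
  then have h: "\<kappa> * s - A \<ge> 1" "\<kappa> * s - A \<ge> \<bar>c\<bar> + \<bar>M\<bar> + 1" by auto
  have "s * (\<kappa> * s - A) \<ge> 1 * (\<kappa> * s - A)" using s1 h by (intro mult_right_mono) auto
  then have "\<kappa> * s\<^sup>2 - A * s \<ge> \<bar>c\<bar> + \<bar>M\<bar> + 1" using h by (simp add: power2_eq_square algebra_simps)
  then show ?thesis by linarith
qed

text \<open>The quadratic minorant supplied by a single prox point makes every prox objective
  coercive once \<open>\<gamma> \<rho> < 1\<close>.\<close>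

lemma prox_objective_coercive:
  fixes g :: "real^'n \<Rightarrow> ereal"
  assumes pr: "proper_fun g" and wc: "weakly_convex \<rho> g"
    and \<gamma>: "\<gamma> > 0" and \<rho>: "\<rho> \<ge> 0" and \<gamma>\<rho>: "\<gamma> * \<rho> < 1"
    and p0: "p0 \<in> prox_set g \<gamma> y0"
  obtains \<kappa> A c where "\<kappa> > 0" "A \<ge> 0"
    "\<And>u. ereal (\<kappa> * (norm u)\<^sup>2 - A * norm u - \<bar>c\<bar>) \<le> g u + ereal ((norm (u - y))\<^sup>2 / (2 * \<gamma>))"
proof
  define \<kappa> where "\<kappa> = (1 / \<gamma> - \<rho>) / 2"
  show "\<kappa> > 0" unfolding \<kappa>_def using \<gamma> \<gamma>\<rho> by (simp add: field_simps)
  define b where "b = (1 / \<gamma>) *\<^sub>R (y0 - p0) + \<rho> *\<^sub>R p0 - (1 / \<gamma>) *\<^sub>R y"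
  define c where "c = real_of_ereal (g p0) - (p0 \<bullet> (y0 - p0)) / \<gamma> - \<rho>/2 * (p0 \<bullet> p0) + (y \<bullet> y) / (2 * \<gamma>)"
  show "norm b \<ge> 0" by simp
  fix u
  have "real_of_ereal (g p0) + ((u - p0) \<bullet> (y0 - p0)) / \<gamma> - \<rho>/2 * ((u - p0) \<bullet> (u - p0))
      + (norm (u - y))\<^sup>2 / (2 * \<gamma>) = \<kappa> * (u \<bullet> u) + u \<bullet> b + c"
    unfolding \<kappa>_def b_def c_def power2_norm_eq_inner using \<gamma>
    by (simp add: inner_diff_left inner_diff_right inner_add_right inner_add_left inner_commute field_simps)
  moreover have "u \<bullet> b \<ge> - (norm b * norm u)"
    using Cauchy_Schwarz_ineq2[of u b] by (simp add: mult.commute abs_le_iff)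
  ultimately have "\<kappa> * (norm u)\<^sup>2 - norm b * norm u - \<bar>c\<bar> \<le> real_of_ereal (g p0)
      + ((u - p0) \<bullet> (y0 - p0)) / \<gamma> - \<rho>/2 * ((u - p0) \<bullet> (u - p0)) + (norm (u - y))\<^sup>2 / (2 * \<gamma>)"
    by (simp add: power2_norm_eq_inner)
  also have "ereal \<dots> \<le> g u + ereal ((norm (u - y))\<^sup>2 / (2 * \<gamma>))"
    unfolding plus_ereal.simps(1)[symmetric]
    by (intro add_right_mono weakly_convex_prox_minorant[OF pr wc \<gamma> \<rho> p0])
  finally show "ereal (\<kappa> * (norm u)\<^sup>2 - norm b * norm u - \<bar>c\<bar>) \<le> g u + ereal ((norm (u - y))\<^sup>2 / (2 * \<gamma>))"
    by simp
qed

lemma prox_set_nonempty: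
  fixes g :: "real^'n \<Rightarrow> ereal"
  assumes pr: "proper_fun g" and lsc: "lsc_fun g" and wc: "weakly_convex \<rho> g"
    and \<gamma>: "\<gamma> > 0" and \<rho>: "\<rho> \<ge> 0" and \<gamma>\<rho>: "\<gamma> * \<rho> < 1"
    and p0: "p0 \<in> prox_set g \<gamma> y0"
  shows "prox_set g \<gamma> y \<noteq> {}"
proof -
  define F where "F u = g u + ereal ((norm (u - y))\<^sup>2 / (2 * \<gamma>))" for u
  obtain \<kappa> A c where \<kappa>: "\<kappa> > 0" and A: "A \<ge> 0"
    and F_ge: "\<And>u. ereal (\<kappa> * (norm u)\<^sup>2 - A * norm u - \<bar>c\<bar>) \<le> F u"
    unfolding F_def using prox_objective_coercive[OF pr wc \<gamma> \<rho> \<gamma>\<rho> p0] by blast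
  obtain u0 where "g u0 \<noteq> \<infinity>" "g u0 \<noteq> -\<infinity>" using pr unfolding proper_fun_def by auto
  then obtain M where M: "F u0 = ereal M" unfolding F_def by (cases "g u0") auto
  show ?thesis
  proof (rule closed_sublevels_attains_min[of F "- A\<^sup>2 / (4 * \<kappa>) - \<bar>c\<bar>" u0 M])
    show "closed {u. F u \<le> ereal r}" for r
      unfolding F_def using \<gamma> by (intro closed_sublevel_lsc_add_continuous lsc continuous_intros) auto
    show "ereal (- A\<^sup>2 / (4 * \<kappa>) - \<bar>c\<bar>) \<le> F u" for u
      using F_ge[of u] quadratic_lower_bound[OF \<kappa>, of A "norm u"]
      by (meson ereal_less_eq(3) order_trans diff_right_mono)
    have "{u. F u \<le> ereal M} \<subseteq> cball 0 ((A + \<bar>c\<bar> + \<bar>M\<bar> + 1) / \<kappa> + 1)"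
    proof (rule subsetI, rule ccontr)
      fix u assume "u \<in> {u. F u \<le> ereal M}" "u \<notin> cball 0 ((A + \<bar>c\<bar> + \<bar>M\<bar> + 1) / \<kappa> + 1)"
      then have "F u \<le> ereal M" "\<kappa> * (norm u)\<^sup>2 - A * norm u - \<bar>c\<bar> > M"
        using quadratic_gt_beyond[OF \<kappa> A, of c M "norm u"] by auto
      then show False using F_ge[of u] by (meson ereal_less_eq(3) leD order_trans)
    qed
    then show "bounded {u. F u \<le> ereal M}" by (rule bounded_subset[OF bounded_cball])
  next
    fix a assume "\<And>u. F a \<le> F u"
    then have "a \<in> prox_set g \<gamma> y" unfolding prox_set_def F_def by blast
    then show ?thesis by blast
  qed (rule M)
qed

lemma prox_set_unique:
  fixes g :: "real^'n \<Rightarrow> ereal"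
  assumes pr: "proper_fun g" and wc: "weakly_convex \<rho> g" and \<gamma>: "\<gamma> > 0" and \<gamma>\<rho>: "\<gamma> * \<rho> < 1"
    and p1: "p1 \<in> prox_set g \<gamma> y" and p2: "p2 \<in> prox_set g \<gamma> y"
  shows "p1 = p2"
proof -
  obtain a1 where a1: "g p1 = ereal a1" using prox_set_finite_value[OF pr p1] by (cases "g p1") auto
  obtain a2 where a2: "g p2 = ereal a2" using prox_set_finite_value[OF pr p2] by (cases "g p2") auto
  define mid where "mid = (1 - 1/2) *\<^sub>R p1 + (1/2) *\<^sub>R p2"
  have cv: "g mid + ereal (\<rho> / 2 * (norm mid)\<^sup>2)
      \<le> ereal (1 - 1/2) * (g p1 + ereal (\<rho> / 2 * (norm p1)\<^sup>2)) + ereal (1/2) * (g p2 + ereal (\<rho> / 2 * (norm p2)\<^sup>2))"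
    using wc[unfolded weakly_convex_def econvex_def, rule_format, of "1/2" p1 p2] unfolding mid_def by simp
  moreover have "g mid \<noteq> -\<infinity>" using pr unfolding proper_fun_def by auto
  ultimately obtain am where am: "g mid = ereal am" using a1 a2 by (cases "g mid") auto
  have c: "am + \<rho> / 2 * (mid \<bullet> mid) \<le> (1/2) * (a1 + \<rho> / 2 * (p1 \<bullet> p1)) + (1/2) * (a2 + \<rho> / 2 * (p2 \<bullet> p2))"
    using cv unfolding am a1 a2 by (simp add: power2_norm_eq_inner)
  define d where "d = p1 - p2"
  define m1 where "m1 = a1 + ((p1 - y) \<bullet> (p1 - y)) / (2 * \<gamma>)"
  define m2 where "m2 = a2 + ((p2 - y) \<bullet> (p2 - y)) / (2 * \<gamma>)"
  have mid2: "mid \<bullet> mid = (p1 \<bullet> p1) / 2 + (p2 \<bullet> p2) / 2 - (d \<bullet> d) / 4"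
    and midy2: "(mid - y) \<bullet> (mid - y) = ((p1 - y) \<bullet> (p1 - y)) / 2 + ((p2 - y) \<bullet> (p2 - y)) / 2 - (d \<bullet> d) / 4"
    unfolding mid_def d_def
    by (simp_all add: inner_add_left inner_add_right inner_diff_left inner_diff_right inner_commute field_simps)
  \<comment> \<open>the prox objective is \<open>(1/\<gamma> - \<rho>)\<close>-strongly convex, so the midpoint would beat both minimisers\<close>
  have "am \<le> (a1 + a2) / 2 + \<rho> / 8 * (d \<bullet> d)"
    using c unfolding mid2 by (simp add: field_simps)
  moreover have "m1 \<le> am + (((p1 - y) \<bullet> (p1 - y)) / 2 + ((p2 - y) \<bullet> (p2 - y)) / 2 - (d \<bullet> d) / 4) / (2 * \<gamma>)"
    using prox_set_le_real[OF p1 a1 am] unfolding m1_def midy2 .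
  moreover have "(a1 + a2) / 2 + \<rho> / 8 * (d \<bullet> d)
      + (((p1 - y) \<bullet> (p1 - y)) / 2 + ((p2 - y) \<bullet> (p2 - y)) / 2 - (d \<bullet> d) / 4) / (2 * \<gamma>)
      = m1 / 2 + m2 / 2 - (1 / \<gamma> - \<rho>) / 8 * (d \<bullet> d)"
    unfolding m1_def m2_def using \<gamma> by (simp add: field_simps)
  ultimately have "m1 \<le> m1 / 2 + m2 / 2 - (1 / \<gamma> - \<rho>) / 8 * (d \<bullet> d)" by linarith
  moreover have "m2 \<le> m1" using prox_set_le_real[OF p2 a2 a1] unfolding m1_def m2_def .
  ultimately have "(1 / \<gamma> - \<rho>) / 8 * (d \<bullet> d) \<le> 0" by linarith
  moreover have "(1 / \<gamma> - \<rho>) / 8 > 0" using \<gamma> \<gamma>\<rho> by (simp add: field_simps)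
  ultimately have "d \<bullet> d \<le> 0" by (simp add: mult_le_0_iff)
  then show ?thesis unfolding d_def by (metis inner_gt_zero_iff not_le right_minus_eq)
qed

section \<open>Moreau and forward-backward envelopes\<close>

definition moreau_env :: "('n::finite vec \<Rightarrow> ereal) \<Rightarrow> real \<Rightarrow> 'n vec \<Rightarrow> real" where
  "moreau_env g \<gamma> y = real_of_ereal (g (prox g \<gamma> y)) + (norm (prox g \<gamma> y - y))\<^sup>2 / (2 * \<gamma>)"

lemma fbe_INF_eq:
  fixes f :: "real^'n \<Rightarrow> real"
  assumes pr: "proper_fun g" and \<gamma>: "\<gamma> > 0" and ex: "prox_set g \<gamma> (x - \<gamma> *\<^sub>R G x) \<noteq> {}"
  shows "(INF u. ereal (f x + G x \<bullet> (u - x)) + g u + ereal ((norm (u - x))\<^sup>2 / (2 * \<gamma>)))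
    = ereal (f x - \<gamma> / 2 * (G x \<bullet> G x) + moreau_env g \<gamma> (x - \<gamma> *\<^sub>R G x))"
proof -
  define y where "y = x - \<gamma> *\<^sub>R G x"
  define p where "p = prox g \<gamma> y"
  have p: "p \<in> prox_set g \<gamma> y" unfolding p_def y_def using prox_in_prox_set[OF ex] .
  obtain gp where gp: "g p = ereal gp" using prox_set_finite_value[OF pr p] by (cases "g p") auto
  define c where "c = f x - \<gamma> / 2 * (G x \<bullet> G x)"
  \<comment> \<open>completing the square turns the forward-backward objective into the prox objective at \<open>y\<close>\<close>
  have square: "f x + G x \<bullet> (u - x) + (norm (u - x))\<^sup>2 / (2 * \<gamma>) = c + (norm (u - y))\<^sup>2 / (2 * \<gamma>)" for u
    unfolding c_def y_def power2_norm_eq_inner using \<gamma>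
    by (simp add: inner_diff_left inner_diff_right inner_add_left inner_add_right inner_commute field_simps)
  define E where "E u = ereal (f x + G x \<bullet> (u - x)) + g u + ereal ((norm (u - x))\<^sup>2 / (2 * \<gamma>))" for u
  have E: "E u = ereal c + (g u + ereal ((norm (u - y))\<^sup>2 / (2 * \<gamma>)))" for u
  proof (cases "g u")
    case (real r)
    then show ?thesis unfolding E_def using square[of u] by (simp add: algebra_simps)
  next
    case PInf then show ?thesis unfolding E_def by simp
  next
    case MInf then show ?thesis using pr unfolding proper_fun_def by auto
  qed
  have "E p \<le> E u" for u
    unfolding E using p unfolding prox_set_def by (auto intro: add_left_mono)
  then have "(INF u. E u) = E p"
    by (intro antisym INF_lower INF_greatest) auto
  also have "E p = ereal (c + moreau_env g \<gamma> y)"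
    unfolding E gp moreau_env_def p_def[symmetric] by simp
  finally show ?thesis unfolding E_def c_def y_def .
qed

lemma fbe_eq:
  fixes f :: "real^'n \<Rightarrow> real"
  assumes "proper_fun g" "\<gamma> > 0" "prox_set g \<gamma> (x - \<gamma> *\<^sub>R G x) \<noteq> {}"
  shows "fbe f G g \<gamma> x = f x - \<gamma> / 2 * (G x \<bullet> G x) + moreau_env g \<gamma> (x - \<gamma> *\<^sub>R G x)"
  unfolding fbe_def fbe_INF_eq[where f = f and G = G and x = x, OF assms] by simp

lemma fbe_le_cost:
  fixes f :: "real^'n \<Rightarrow> real"
  assumes "proper_fun g" "\<gamma> > 0" "prox_set g \<gamma> (x - \<gamma> *\<^sub>R G x) \<noteq> {}"
  shows "ereal (fbe f G g \<gamma> x) \<le> ereal (f x) + g x"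
proof -
  have "ereal (fbe f G g \<gamma> x)
      = (INF u. ereal (f x + G x \<bullet> (u - x)) + g u + ereal ((norm (u - x))\<^sup>2 / (2 * \<gamma>)))"
    unfolding fbe_eq[where f = f and G = G and x = x, OF assms] fbe_INF_eq[where f = f and G = G and x = x, OF assms] ..
  also have "\<dots> \<le> ereal (f x + G x \<bullet> (x - x)) + g x + ereal ((norm (x - x))\<^sup>2 / (2 * \<gamma>))"
    by (rule INF_lower) simp
  finally show ?thesis by simp
qed

lemma moreau_env_increment_bounds:
  fixes g :: "real^'n \<Rightarrow> ereal" and y z :: "real^'n"
  assumes pr: "proper_fun g" and \<gamma>: "\<gamma> > 0" and ex: "\<And>y. prox_set g \<gamma> y \<noteq> {}"
  defines "v \<equiv> (1 / \<gamma>) *\<^sub>R (y - prox g \<gamma> y)"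
  shows "moreau_env g \<gamma> z - moreau_env g \<gamma> y - v \<bullet> (z - y) \<le> (norm (z - y))\<^sup>2 / (2 * \<gamma>)"
    and "((1 / \<gamma>) *\<^sub>R (prox g \<gamma> y - prox g \<gamma> z)) \<bullet> (z - y)
      \<le> moreau_env g \<gamma> z - moreau_env g \<gamma> y - v \<bullet> (z - y)"
proof -
  define P where "P = prox g \<gamma>"
  have Pin: "P z \<in> prox_set g \<gamma> z" for z unfolding P_def by (rule prox_in_prox_set[OF ex])
  define gv where "gv z = real_of_ereal (g (P z))" for z
  have gv: "g (P z) = ereal (gv z)" for z
    using prox_set_finite_value[OF pr Pin[of z]] unfolding gv_def by (cases "g (P z)") auto
  have env: "moreau_env g \<gamma> z = gv z + ((P z - z) \<bullet> (P z - z)) / (2 * \<gamma>)" for z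
    unfolding moreau_env_def gv_def P_def by (simp add: power2_norm_eq_inner)
  \<comment> \<open>compare the prox objective at each point with its value at the other point's prox\<close>
  have "gv z + ((P z - z) \<bullet> (P z - z)) / (2 * \<gamma>) \<le> gv y + ((P y - z) \<bullet> (P y - z)) / (2 * \<gamma>)"
    using prox_set_le_real[OF Pin[of z] gv gv] .
  moreover have "((P y - z) \<bullet> (P y - z)) / (2 * \<gamma>)
      = ((P y - y) \<bullet> (P y - y)) / (2 * \<gamma>) + v \<bullet> (z - y) + (norm (z - y))\<^sup>2 / (2 * \<gamma>)"
    using \<gamma> unfolding power2_norm_eq_inner v_def P_def
    by (simp add: inner_diff_left inner_diff_right inner_commute field_simps)
  ultimately show "moreau_env g \<gamma> z - moreau_env g \<gamma> y - v \<bullet> (z - y) \<le> (norm (z - y))\<^sup>2 / (2 * \<gamma>)"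
    unfolding env by linarith
  have "gv y + ((P y - y) \<bullet> (P y - y)) / (2 * \<gamma>) \<le> gv z + ((P z - y) \<bullet> (P z - y)) / (2 * \<gamma>)"
    using prox_set_le_real[OF Pin[of y] gv gv] .
  moreover have "((P z - y) \<bullet> (P z - y)) / (2 * \<gamma>) = ((P z - z) \<bullet> (P z - z)) / (2 * \<gamma>)
      - ((1 / \<gamma>) *\<^sub>R (y - P z)) \<bullet> (z - y) - (norm (z - y))\<^sup>2 / (2 * \<gamma>)"
    using \<gamma> unfolding power2_norm_eq_inner
    by (simp add: inner_diff_left inner_diff_right inner_commute field_simps)
  moreover have "(norm (z - y))\<^sup>2 / (2 * \<gamma>) \<ge> 0" using \<gamma> by simp
  moreover have "((1 / \<gamma>) *\<^sub>R (P y - P z)) \<bullet> (z - y) = ((1 / \<gamma>) *\<^sub>R (y - P z)) \<bullet> (z - y) - v \<bullet> (z - y)"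
    unfolding v_def P_def by (simp add: inner_diff_left algebra_simps)
  ultimately show "((1 / \<gamma>) *\<^sub>R (prox g \<gamma> y - prox g \<gamma> z)) \<bullet> (z - y)
      \<le> moreau_env g \<gamma> z - moreau_env g \<gamma> y - v \<bullet> (z - y)"
    unfolding env P_def by linarith
qed

lemma moreau_env_has_derivative:
  fixes g :: "real^'n \<Rightarrow> ereal"
  assumes pr: "proper_fun g" and \<gamma>: "\<gamma> > 0" and ex: "\<And>y. prox_set g \<gamma> y \<noteq> {}"
    and cont: "isCont (prox g \<gamma>) y"
  shows "(moreau_env g \<gamma> has_derivative (\<lambda>h. ((1 / \<gamma>) *\<^sub>R (y - prox g \<gamma> y)) \<bullet> h)) (at y)"
  unfolding has_derivative_at_alt
proof (intro conjI allI impI bounded_linear_inner_right)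
  define P where "P = prox g \<gamma>"
  define v where "v = (1 / \<gamma>) *\<^sub>R (y - P y)"
  fix e :: real assume e: "e > 0"
  have "eventually (\<lambda>z. dist (P z) (P y) < e * \<gamma> / 2) (at y)"
    using cont e \<gamma> unfolding isCont_def P_def by (intro tendstoD) auto
  then obtain d1 where d1: "d1 > 0"
    and Pz: "\<And>z. z \<noteq> y \<Longrightarrow> dist z y < d1 \<Longrightarrow> dist (P z) (P y) < e * \<gamma> / 2"
    unfolding eventually_at by blast
  show "\<exists>d>0. \<forall>z. norm (z - y) < d \<longrightarrow> norm (moreau_env g \<gamma> z - moreau_env g \<gamma> y
      - ((1 / \<gamma>) *\<^sub>R (y - prox g \<gamma> y)) \<bullet> (z - y)) \<le> e * norm (z - y)"
    unfolding P_def[symmetric] v_def[symmetric]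
  proof (intro exI[of _ "min d1 (e * \<gamma>)"] conjI allI impI)
    show "min d1 (e * \<gamma>) > 0" using d1 e \<gamma> by simp
    fix z assume z: "norm (z - y) < min d1 (e * \<gamma>)"
    show "norm (moreau_env g \<gamma> z - moreau_env g \<gamma> y - v \<bullet> (z - y)) \<le> e * norm (z - y)"
    proof (cases "z = y")
      case True then show ?thesis by simp
    next
      case False
      have "(norm (z - y))\<^sup>2 \<le> (e * \<gamma>) * norm (z - y)"
        using z unfolding power2_eq_square by (intro mult_right_mono) auto
      moreover have "0 \<le> (e * \<gamma>) * norm (z - y)" using e \<gamma> by simp
      moreover have "e * norm (z - y) * (2 * \<gamma>) = 2 * ((e * \<gamma>) * norm (z - y))"
        by (simp add: algebra_simps)
      ultimately have "(norm (z - y))\<^sup>2 \<le> e * norm (z - y) * (2 * \<gamma>)" by linarith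
      then have up: "(norm (z - y))\<^sup>2 / (2 * \<gamma>) \<le> e * norm (z - y)"
        using \<gamma> by (simp add: pos_divide_le_eq)
      have "norm (P y - P z) \<le> e * \<gamma> / 2"
        using Pz[OF False] z by (simp add: dist_norm norm_minus_commute)
      then have "norm (P y - P z) / \<gamma> \<le> e / 2" using \<gamma> by (simp add: field_simps)
      have "\<bar>((1 / \<gamma>) *\<^sub>R (P y - P z)) \<bullet> (z - y)\<bar> \<le> (norm (P y - P z) / \<gamma>) * norm (z - y)"
        using Cauchy_Schwarz_ineq2[of "(1 / \<gamma>) *\<^sub>R (P y - P z)" "z - y"] \<gamma> by simp
      also have "\<dots> \<le> (e / 2) * norm (z - y)"
        using \<open>norm (P y - P z) / \<gamma> \<le> e / 2\<close> by (rule mult_right_mono) simp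
      also have "\<dots> \<le> e * norm (z - y)" using e by (simp add: mult_right_mono)
      finally have lo: "- (e * norm (z - y)) \<le> ((1 / \<gamma>) *\<^sub>R (P y - P z)) \<bullet> (z - y)" by linarith
      show ?thesis
        using moreau_env_increment_bounds[OF pr \<gamma> ex, where y = y and z = z] up lo
        unfolding P_def v_def by (simp add: abs_le_iff)
    qed
  qed
qed

lemma prox_derivative_symmetric:
  fixes g :: "real^'n \<Rightarrow> ereal"
  assumes pr: "proper_fun g" and \<gamma>: "\<gamma> > 0" and ex: "\<And>y. prox_set g \<gamma> y \<noteq> {}"
    and V: "open V" and D: "\<And>y. y \<in> V \<Longrightarrow> (prox g \<gamma> has_derivative blinfun_apply (D y)) (at y)"
    and y: "y \<in> V"
  shows "u \<bullet> D y v = v \<bullet> D y u"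
proof -
  obtain r where r: "r > 0" "ball y r \<subseteq> V" using V y open_contains_ball by blast
  define A where "A = (1 / \<gamma>) *\<^sub>R (mat 1 - matrix (blinfun_apply (D y)))"
  have A: "A *v h = (1 / \<gamma>) *\<^sub>R (h - D y h)" for h
    unfolding A_def
    by (simp add: matrix_vector_mult_diff_rdistrib scaleR_matrix_vector_assoc[symmetric] matrix_blinfun_apply)
  have cont: "isCont (prox g \<gamma>) z" if "z \<in> V" for z
    using D[OF that] has_derivative_continuous by blast
  \<comment> \<open>\<open>D y\<close> is, up to \<open>I/\<gamma>\<close>, the Hessian of the Moreau envelope\<close>
  have "u \<bullet> (A *v v) = v \<bullet> (A *v u)"
  proof (rule derivative_of_gradient_symmetric[OF r(1)])
    show "(moreau_env g \<gamma> has_derivative (\<lambda>h. ((1 / \<gamma>) *\<^sub>R (z - prox g \<gamma> z)) \<bullet> h)) (at z)"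
      if "z \<in> ball y r" for z
      using moreau_env_has_derivative[OF pr \<gamma> ex cont] that r(2) by blast
    show "((\<lambda>z. (1 / \<gamma>) *\<^sub>R (z - prox g \<gamma> z)) has_derivative (\<lambda>h. A *v h)) (at y)"
      unfolding A by (auto intro!: derivative_eq_intros D y)
  qed
  then show ?thesis unfolding A using \<gamma> by (simp add: inner_diff_right inner_commute)
qed

lemma clarke_jac_eq_singleton:
  assumes V: "open V" "continuous_on V D"
    and D: "\<And>y. y \<in> V \<Longrightarrow> (F has_derivative blinfun_apply (D y)) (at y)"
    and y: "y \<in> V"
  shows "clarke_jac F y = {matrix (blinfun_apply (D y))}"
proof -
  have "bouligand_jac F y = {matrix (blinfun_apply (D y))}"
  proof (intro equalityI subsetI)
    fix M assume "M \<in> bouligand_jac F y"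
    then obtain xs Ms where xs: "xs \<longlonglongrightarrow> y" and Ms: "Ms \<longlonglongrightarrow> M"
      and dM: "\<And>k. (F has_derivative (\<lambda>h. Ms k *v h)) (at (xs k))"
      unfolding bouligand_jac_def by blast
    have "eventually (\<lambda>k. xs k \<in> V) sequentially" using xs V(1) y by (rule topological_tendstoD)
    then have ev: "eventually (\<lambda>k. Ms k = matrix (blinfun_apply (D (xs k)))) sequentially"
    proof eventually_elim
      case (elim k)
      have "(\<lambda>h. Ms k *v h) = blinfun_apply (D (xs k))" using has_derivative_unique[OF dM D[OF elim]] .
      then show ?case by (metis matrix_of_matrix_vector_mul)
    qed
    have "(\<lambda>k. matrix (blinfun_apply (D (xs k)))) \<longlonglongrightarrow> matrix (blinfun_apply (D y))"
      using V y by (intro tendsto_matrix_blinfun isCont_tendsto_compose[OF _ xs])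
        (simp add: continuous_on_eq_continuous_at)
    then have "Ms \<longlonglongrightarrow> matrix (blinfun_apply (D y))"
      using ev by (rule Lim_transform_eventually[OF _ eventually_mono]) auto
    then show "M \<in> {matrix (blinfun_apply (D y))}" using Ms LIMSEQ_unique by auto
  next
    fix M assume "M \<in> {matrix (blinfun_apply (D y))}"
    then have "(F has_derivative (\<lambda>h. M *v h)) (at y)" using D[OF y] by (simp add: matrix_blinfun_apply)
    then show "M \<in> bouligand_jac F y" unfolding bouligand_jac_def
      by (intro CollectI exI[of _ "\<lambda>_. y"] exI[of _ "\<lambda>_. M"]) auto
  qed
  then show ?thesis unfolding clarke_jac_def by simp
qed

section \<open>Smoothness of the forward-backward envelope near a critical point\<close>

locale fbe_smooth_near_critical =
  fixes f :: "real^'n \<Rightarrow> real" and G :: "real^'n \<Rightarrow> real^'n" and H :: "real^'n \<Rightarrow> real^'n^'n"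
    and g :: "real^'n \<Rightarrow> ereal" and \<rho> \<gamma> :: real and xstar :: "real^'n"
    and U :: "(real^'n) set" and H' :: "real^'n \<Rightarrow> (real^'n) \<Rightarrow>\<^sub>L (real^'n^'n)"
    and V :: "(real^'n) set" and D :: "real^'n \<Rightarrow> (real^'n) \<Rightarrow>\<^sub>L (real^'n)"
  assumes grad_f: "\<And>x. (f has_derivative (\<lambda>h. G x \<bullet> h)) (at x)"
    and hess_f: "\<And>x. (G has_derivative (\<lambda>h. H x *v h)) (at x)"
    and proper: "proper_fun g" and lsc: "lsc_fun g" and weakly_convex: "weakly_convex \<rho> g"
    and \<rho>: "\<rho> \<ge> 0" and \<gamma>: "\<gamma> > 0" and \<gamma>\<rho>: "\<gamma> * \<rho> < 1"
    and critical: "xstar \<in> prox_set g \<gamma> (xstar - \<gamma> *\<^sub>R G xstar)"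
    and U: "open U" "xstar \<in> U" "continuous_on U H'"
      "\<And>y. y \<in> U \<Longrightarrow> (H has_derivative blinfun_apply (H' y)) (at y)"
    and V: "open V" "xstar - \<gamma> *\<^sub>R G xstar \<in> V" "continuous_on V D"
      "\<And>y. y \<in> V \<Longrightarrow> (prox g \<gamma> has_derivative blinfun_apply (D y)) (at y)"
begin

abbreviation "\<phi>\<gamma> \<equiv> fbe f G g \<gamma>"

definition "fwd x = x - \<gamma> *\<^sub>R G x"
definition "T x = prox g \<gamma> (fwd x)"
definition "R x = (1 / \<gamma>) *\<^sub>R (x - T x)"
definition "Q x = ntra_Q H \<gamma> x"
definition "J x = matrix (blinfun_apply (D (fwd x)))"
definition "B x = ntra_B H \<gamma> x (J x)"
definition "fbe_grad x = Q x *v R x"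
definition "fbe_hess x h = (- \<gamma> *\<^sub>R blinfun_apply (H' x) h) *v R x + B x *v h"
definition "nbhd = U \<inter> fwd -` V"

text \<open>\<open>fwd\<close>, \<open>T\<close>, \<open>R\<close>, \<open>Q\<close>, \<open>J\<close>, \<open>B\<close> are the paper's \<open>x - \<gamma> \<nabla>f(x)\<close>, \<open>T\<^sub>\<gamma>\<close>, \<open>R\<^sub>\<gamma>\<close>,
  \<open>Q\<^sub>\<gamma>\<close>, the Jacobian \<open>P\<close> of the prox and \<open>B\<close>; \<open>fbe_grad\<close> is \<open>\<nabla>\<phi>\<^sub>\<gamma>\<close> and \<open>fbe_hess x\<close>
  its derivative, on the neighbourhood \<open>nbhd\<close> of \<open>x\<^sup>\<star>\<close> where both smoothness hypotheses apply.\<close>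

lemma prox_set_ne: "prox_set g \<gamma> y \<noteq> {}"
  by (rule prox_set_nonempty[OF proper lsc weakly_convex \<gamma> \<rho> \<gamma>\<rho> critical])

lemma T_xstar: "T xstar = xstar"
  unfolding T_def fwd_def
  using prox_set_unique[OF proper weakly_convex \<gamma> \<gamma>\<rho> prox_in_prox_set[OF prox_set_ne] critical] .

lemma R_xstar: "R xstar = 0"
  unfolding R_def using T_xstar by simp

lemma fbe_grad_xstar: "fbe_grad xstar = 0"
  unfolding fbe_grad_def R_xstar by simp

lemma H_symmetric: "u \<bullet> (H x *v v) = v \<bullet> (H x *v u)"
  by (rule derivative_of_gradient_symmetric[of 1 x f G]) (use grad_f hess_f in auto)

lemma Q_mult: "Q x *v v = v - \<gamma> *\<^sub>R (H x *v v)"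
  unfolding Q_def ntra_Q_def by (simp add: matrix_vector_mult_diff_rdistrib scaleR_matrix_vector_assoc)

lemma Q_symmetric: "u \<bullet> (Q x *v v) = v \<bullet> (Q x *v u)"
  unfolding Q_mult using H_symmetric[of u x v] by (simp add: inner_diff_right inner_commute)

lemma B_mult: "B x *v h = Q x *v ((1 / \<gamma>) *\<^sub>R (h - D (fwd x) (Q x *v h)))"
proof -
  have "B x *v h = (1 / \<gamma>) *\<^sub>R (Q x *v (h - J x *v (Q x *v h)))"
    unfolding B_def ntra_B_def Q_def[symmetric]
    by (simp add: scaleR_matrix_vector_assoc[symmetric] matrix_vector_mul_assoc[symmetric]
        matrix_vector_mult_diff_distrib matrix_vector_mult_diff_rdistrib)
  also have "\<dots> = Q x *v ((1 / \<gamma>) *\<^sub>R (h - D (fwd x) (Q x *v h)))"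
    unfolding J_def matrix_blinfun_apply by (simp add: matrix_vector_mult_scaleR)
  finally show ?thesis .
qed

lemma B_symmetric:
  assumes "fwd x \<in> V"
  shows "u \<bullet> (B x *v v) = v \<bullet> (B x *v u)"
proof -
  have B_form: "u \<bullet> (B x *v v) = (1 / \<gamma>) * ((Q x *v u) \<bullet> v - (Q x *v u) \<bullet> D (fwd x) (Q x *v v))" for u v
    unfolding B_mult by (simp add: Q_symmetric[of u x] inner_diff_right inner_commute)
  have "(Q x *v u) \<bullet> D (fwd x) (Q x *v v) = (Q x *v v) \<bullet> D (fwd x) (Q x *v u)"
    by (rule prox_derivative_symmetric[OF proper \<gamma> prox_set_ne V(1) V(4) assms])
  moreover have "(Q x *v u) \<bullet> v = (Q x *v v) \<bullet> u" using Q_symmetric[of v x u] by (simp add: inner_commute)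
  ultimately show ?thesis unfolding B_form[of u v] B_form[of v u] by simp
qed

lemma fwd_has_derivative: "(fwd has_derivative (\<lambda>h. h - \<gamma> *\<^sub>R (H x *v h))) (at x)"
  unfolding fwd_def by (auto intro!: derivative_eq_intros hess_f)

lemma isCont_fwd: "isCont fwd x"
  using fwd_has_derivative has_derivative_continuous by blast

lemma open_nbhd: "open nbhd"
  unfolding nbhd_def using U(1) V(1) isCont_fwd by (intro open_Int continuous_open_vimage) auto

lemma xstar_in_nbhd: "xstar \<in> nbhd"
  unfolding nbhd_def fwd_def using U(2) V(2) by auto

lemma fbe_has_derivative:
  assumes x: "fwd x \<in> V"
  shows "(\<phi>\<gamma> has_derivative (\<lambda>h. fbe_grad x \<bullet> h)) (at x)"
proof -
  have "isCont (prox g \<gamma>) (fwd x)"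
    using V(4)[OF x] has_derivative_continuous by blast
  then have "((\<lambda>x. moreau_env g \<gamma> (fwd x)) has_derivative
      (\<lambda>h. ((1 / \<gamma>) *\<^sub>R (fwd x - prox g \<gamma> (fwd x))) \<bullet> (h - \<gamma> *\<^sub>R (H x *v h)))) (at x)"
    using has_derivative_compose[OF fwd_has_derivative moreau_env_has_derivative[OF proper \<gamma> prox_set_ne]]
    by simp
  then have "((\<lambda>x. f x - \<gamma> / 2 * (G x \<bullet> G x) + moreau_env g \<gamma> (fwd x)) has_derivative
     (\<lambda>h. G x \<bullet> h - \<gamma> / 2 * (G x \<bullet> (H x *v h) + (H x *v h) \<bullet> G x)
        + ((1 / \<gamma>) *\<^sub>R (fwd x - prox g \<gamma> (fwd x))) \<bullet> (h - \<gamma> *\<^sub>R (H x *v h)))) (at x)"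
    by (intro derivative_intros grad_f hess_f)
  moreover have "\<phi>\<gamma> = (\<lambda>x. f x - \<gamma> / 2 * (G x \<bullet> G x) + moreau_env g \<gamma> (fwd x))"
    unfolding fwd_def by (intro ext fbe_eq[OF proper \<gamma> prox_set_ne])
  moreover have "G x \<bullet> h - \<gamma> / 2 * (G x \<bullet> (H x *v h) + (H x *v h) \<bullet> G x)
      + ((1 / \<gamma>) *\<^sub>R (fwd x - prox g \<gamma> (fwd x))) \<bullet> (h - \<gamma> *\<^sub>R (H x *v h)) = fbe_grad x \<bullet> h" for h
  proof -
    have e: "(1 / \<gamma>) *\<^sub>R (fwd x - prox g \<gamma> (fwd x)) = R x - G x"
      unfolding R_def T_def fwd_def using \<gamma> by (simp add: algebra_simps)
    show ?thesis
      unfolding e fbe_grad_def Q_mult using H_symmetric[of "R x" x h]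
      by (simp add: inner_diff_left inner_diff_right inner_commute algebra_simps)
  qed
  ultimately show ?thesis by simp
qed

lemma grad_fbe: "fwd x \<in> V \<Longrightarrow> grad \<phi>\<gamma> x = fbe_grad x"
  by (rule gradI[OF fbe_has_derivative])

lemma fbe_grad_has_derivative:
  assumes "x \<in> nbhd"
  shows "(fbe_grad has_derivative fbe_hess x) (at x)"
proof -
  have xU: "x \<in> U" and xV: "fwd x \<in> V" using assms unfolding nbhd_def by auto
  have dQ: "(Q has_derivative (\<lambda>h. - \<gamma> *\<^sub>R blinfun_apply (H' x) h)) (at x)"
  proof -
    have "((\<lambda>x. mat 1 - \<gamma> *\<^sub>R H x) has_derivative (\<lambda>h. 0 - \<gamma> *\<^sub>R blinfun_apply (H' x) h)) (at x)"
      by (intro derivative_intros U(4) xU)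
    then show ?thesis unfolding Q_def[abs_def] ntra_Q_def by simp
  qed
  have "(T has_derivative (\<lambda>h. D (fwd x) (h - \<gamma> *\<^sub>R (H x *v h)))) (at x)"
    unfolding T_def[abs_def] using has_derivative_compose[OF fwd_has_derivative V(4)[OF xV]] by simp
  then have dR: "(R has_derivative (\<lambda>h. (1 / \<gamma>) *\<^sub>R (h - D (fwd x) (h - \<gamma> *\<^sub>R (H x *v h))))) (at x)"
    unfolding R_def[abs_def] by (intro derivative_intros)
  have "(fbe_grad has_derivative (\<lambda>h. Q x *v ((1 / \<gamma>) *\<^sub>R (h - D (fwd x) (h - \<gamma> *\<^sub>R (H x *v h))))
      + (- \<gamma> *\<^sub>R blinfun_apply (H' x) h) *v R x)) (at x)"
    unfolding fbe_grad_def[abs_def]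
    using bounded_bilinear.FDERIV[OF bounded_bilinear_matrix_vector_mult dQ dR] by simp
  moreover have "(\<lambda>h. Q x *v ((1 / \<gamma>) *\<^sub>R (h - D (fwd x) (h - \<gamma> *\<^sub>R (H x *v h))))
      + (- \<gamma> *\<^sub>R blinfun_apply (H' x) h) *v R x) = fbe_hess x"
    unfolding fbe_hess_def[abs_def] B_mult Q_mult[symmetric] by (auto simp: algebra_simps)
  ultimately show ?thesis by simp
qed

lemma isCont_B: "isCont B xstar"
proof -
  have "isCont H xstar" using U(4)[OF U(2)] has_derivative_continuous by blast
  then have "(H \<longlongrightarrow> H xstar) (at xstar)" unfolding isCont_def .
  then have Q: "(Q \<longlongrightarrow> Q xstar) (at xstar)"
    unfolding Q_def[abs_def] ntra_Q_def by (intro tendsto_intros)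
  have "isCont D (fwd xstar)"
    using V(1,2,3) unfolding fwd_def by (simp add: continuous_on_eq_continuous_at)
  then have "((\<lambda>x. D (fwd x)) \<longlongrightarrow> D (fwd xstar)) (at xstar)"
    using isCont_tendsto_compose isCont_fwd unfolding isCont_def by blast
  then have "(J \<longlongrightarrow> J xstar) (at xstar)"
    unfolding J_def[abs_def] by (rule tendsto_matrix_blinfun)
  with Q show ?thesis
    unfolding isCont_def B_def[abs_def] ntra_B_def Q_def[symmetric]
    by (intro tendsto_intros tendsto_matrix_matrix_mult)
qed

lemma isCont_R: "isCont R xstar"
proof -
  have "isCont (prox g \<gamma>) (fwd xstar)"
    using V(2,4) has_derivative_continuous unfolding fwd_def by blast
  then have "isCont T xstar" unfolding T_def[abs_def] using isCont_fwd isCont_o2 by blast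
  then show ?thesis unfolding R_def[abs_def] by (intro continuous_intros)
qed

lemma isCont_fbe_grad: "isCont fbe_grad xstar"
  using fbe_grad_has_derivative[OF xstar_in_nbhd] has_derivative_continuous by blast

lemma fbe_hess_xstar: "fbe_hess xstar h = B xstar *v h"
  unfolding fbe_hess_def R_xstar by simp

lemma onorm_fbe_hess_diff_le:
  "onorm (\<lambda>h. fbe_hess z h - fbe_hess xstar h) \<le> \<gamma> * norm (H' z) * norm (R z) + norm (B z - B xstar)"
proof (rule onorm_le)
  fix h
  have "norm ((- \<gamma> *\<^sub>R blinfun_apply (H' z) h) *v R z) \<le> norm (- \<gamma> *\<^sub>R blinfun_apply (H' z) h) * norm (R z)"
    by (rule norm_matrix_vector_mult_le)
  also have "\<dots> \<le> (\<gamma> * (norm (H' z) * norm h)) * norm (R z)"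
    using \<gamma> norm_blinfun[of "H' z" h] by (intro mult_right_mono) (auto intro: mult_left_mono)
  finally have "norm ((- \<gamma> *\<^sub>R blinfun_apply (H' z) h) *v R z) \<le> (\<gamma> * (norm (H' z) * norm h)) * norm (R z)" .
  moreover have "norm ((B z - B xstar) *v h) \<le> norm (B z - B xstar) * norm h"
    by (rule norm_matrix_vector_mult_le)
  moreover have diff: "fbe_hess z h - fbe_hess xstar h
      = (- \<gamma> *\<^sub>R blinfun_apply (H' z) h) *v R z + (B z - B xstar) *v h"
    unfolding fbe_hess_def R_xstar by (simp add: matrix_vector_mult_diff_rdistrib)
  moreover have "(\<gamma> * (norm (H' z) * norm h)) * norm (R z) + norm (B z - B xstar) * norm h
      = (\<gamma> * norm (H' z) * norm (R z) + norm (B z - B xstar)) * norm h"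
    by (simp add: algebra_simps)
  ultimately show "norm (fbe_hess z h - fbe_hess xstar h)
      \<le> (\<gamma> * norm (H' z) * norm (R z) + norm (B z - B xstar)) * norm h"
    unfolding diff
    using norm_triangle_ineq[of "(- \<gamma> *\<^sub>R blinfun_apply (H' z) h) *v R z" "(B z - B xstar) *v h"]
    by linarith
qed

lemma eventually_fbe_hess_close:
  assumes e: "e > 0"
  shows "eventually (\<lambda>z. onorm (\<lambda>h. fbe_hess z h - fbe_hess xstar h) \<le> e) (nhds xstar)"
proof -
  have "isCont H' xstar" using U(1,2,3) by (simp add: continuous_on_eq_continuous_at)
  then have "isCont (\<lambda>z. \<gamma> * norm (H' z) * norm (R z) + norm (B z - B xstar)) xstar"
    using isCont_R isCont_B by (intro continuous_intros)
  from isCont_tendsto_nhds[OF this]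
  have "((\<lambda>z. \<gamma> * norm (H' z) * norm (R z) + norm (B z - B xstar)) \<longlongrightarrow> 0) (nhds xstar)"
    by (simp add: R_xstar)
  then have "eventually (\<lambda>z. \<gamma> * norm (H' z) * norm (R z) + norm (B z - B xstar) < e) (nhds xstar)"
    using e by (rule order_tendstoD(2))
  then show ?thesis
    by eventually_elim (use onorm_fbe_hess_diff_le in \<open>blast intro: order_trans less_imp_le\<close>)
qed

text \<open>At \<open>x\<^sup>\<star>\<close> the residual vanishes, so \<open>B x\<close> approximates the Hessian of \<open>\<phi>\<^sub>\<gamma>\<close> uniformly near \<open>x\<^sup>\<star>\<close>.\<close>

lemma fbe_taylor:
  assumes e: "e > 0"
  obtains r where "r > 0" "ball xstar r \<subseteq> nbhd"
    "\<And>x d. x \<in> ball xstar r \<Longrightarrow> x + d \<in> ball xstar r \<Longrightarrow>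
       \<bar>\<phi>\<gamma> (x + d) - \<phi>\<gamma> x - fbe_grad x \<bullet> d - 1/2 * (d \<bullet> (B x *v d))\<bar> \<le> e * (norm d)\<^sup>2"
proof -
  have "eventually (\<lambda>z. z \<in> nbhd) (nhds xstar)"
    using open_nbhd xstar_in_nbhd by (rule eventually_nhds_in_open)
  moreover have "eventually (\<lambda>z. dist (B z) (B xstar) < e / 2) (nhds xstar)"
    using isCont_tendsto_nhds[OF isCont_B] e by (intro tendstoD) auto
  moreover have "eventually (\<lambda>z. onorm (\<lambda>h. fbe_hess z h - fbe_hess xstar h) \<le> e / 2) (nhds xstar)"
    using e by (intro eventually_fbe_hess_close) simp
  ultimately have "eventually (\<lambda>z. z \<in> nbhd \<and> norm (B xstar - B z) \<le> e / 2
      \<and> onorm (\<lambda>h. fbe_hess z h - fbe_hess xstar h) \<le> e / 2) (nhds xstar)"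
    by eventually_elim (simp add: dist_norm norm_minus_commute)
  then obtain r where r: "r > 0" and near: "\<And>z. z \<in> ball xstar r \<Longrightarrow> z \<in> nbhd \<and>
      norm (B xstar - B z) \<le> e / 2 \<and> onorm (\<lambda>h. fbe_hess z h - fbe_hess xstar h) \<le> e / 2"
    unfolding eventually_nhds_metric by (auto simp: dist_commute)
  show ?thesis
  proof (rule that[OF r])
    show "ball xstar r \<subseteq> nbhd" using near by blast
    fix x d assume x: "x \<in> ball xstar r" and xd: "x + d \<in> ball xstar r"
    have "\<bar>\<phi>\<gamma> (x + d) - \<phi>\<gamma> x - fbe_grad x \<bullet> d - 1/2 * (d \<bullet> (B x *v d))\<bar> \<le> 2 * (e / 2) * (norm d)\<^sup>2"
    proof (rule second_order_taylor_bound[where \<phi> = \<phi>\<gamma> and \<Psi> = fbe_grad and \<Psi>' = fbe_hess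
          and S = "ball xstar r" and p = xstar and A = "B xstar" and M = "B x" and e = "e / 2"])
      show "(\<phi>\<gamma> has_derivative (\<lambda>h. fbe_grad z \<bullet> h)) (at z)" if "z \<in> ball xstar r" for z
        using near[OF that] by (intro fbe_has_derivative) (auto simp: nbhd_def)
      show "(fbe_grad has_derivative fbe_hess z) (at z)" if "z \<in> ball xstar r" for z
        using near[OF that] by (intro fbe_grad_has_derivative) auto
      show "norm (B xstar - B x) \<le> e / 2" using near[OF x] by simp
    qed (use x xd r near fbe_hess_xstar in auto)
    then show "\<bar>\<phi>\<gamma> (x + d) - \<phi>\<gamma> x - fbe_grad x \<bullet> d - 1/2 * (d \<bullet> (B x *v d))\<bar> \<le> e * (norm d)\<^sup>2"
      by simp
  qed
qed

lemma cost_xstar: "ereal (f xstar) + g xstar = ereal (\<phi>\<gamma> xstar)"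
proof -
  have gx: "g xstar = ereal (real_of_ereal (g xstar))"
    using prox_set_finite_value[OF proper critical] by (cases "g xstar") auto
  have "prox g \<gamma> (xstar - \<gamma> *\<^sub>R G xstar) = xstar" using T_xstar unfolding T_def fwd_def .
  then have "\<phi>\<gamma> xstar = f xstar - \<gamma> / 2 * (G xstar \<bullet> G xstar)
      + (real_of_ereal (g xstar) + (norm (\<gamma> *\<^sub>R G xstar))\<^sup>2 / (2 * \<gamma>))"
    unfolding fbe_eq[OF proper \<gamma> prox_set_ne] moreau_env_def by simp
  also have "(norm (\<gamma> *\<^sub>R G xstar))\<^sup>2 / (2 * \<gamma>) = \<gamma> / 2 * (G xstar \<bullet> G xstar)"
    using \<gamma> by (simp add: power_mult_distrib dot_square_norm power2_eq_square field_simps)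
  finally show ?thesis by (subst gx) simp
qed

lemma clarke_jac_fwd:
  assumes "fwd x \<in> V"
  shows "clarke_jac (prox g \<gamma>) (fwd x) = {J x}"
  unfolding J_def by (rule clarke_jac_eq_singleton[OF V(1,3) V(4) assms])

end

section \<open>The trust-region iteration near its limit\<close>

lemma eventually_ge_if_step_ge_min:
  fixes \<delta> :: "nat \<Rightarrow> real"
  assumes pos: "\<And>k. \<delta> k > 0" and a: "a > 0"
    and step: "eventually (\<lambda>k. \<delta> (Suc k) \<ge> min (\<delta> k) a) sequentially"
  obtains \<eta> where "\<eta> > 0" "eventually (\<lambda>k. \<delta> k \<ge> \<eta>) sequentially"
proof -
  obtain K where K: "\<And>k. k \<ge> K \<Longrightarrow> \<delta> (Suc k) \<ge> min (\<delta> k) a"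
    using step unfolding eventually_sequentially by blast
  have "\<delta> (K + n) \<ge> min (\<delta> K) a" for n
  proof (induction n)
    case 0 show ?case by simp
  next
    case (Suc n)
    have "min (\<delta> K) a \<le> min (\<delta> (K + n)) a" using Suc by simp
    also have "\<dots> \<le> \<delta> (Suc (K + n))" using K[of "K + n"] by simp
    finally show ?case by simp
  qed
  then have "\<delta> k \<ge> min (\<delta> K) a" if "k \<ge> K" for k
    using that by (metis le_add_diff_inverse)
  then have "eventually (\<lambda>k. \<delta> k \<ge> min (\<delta> K) a) sequentially"
    unfolding eventually_sequentially by blast
  moreover have "min (\<delta> K) a > 0" using pos a by simp
  ultimately show ?thesis using that by blast
qed

lemma geometric_step_tendsto_zero:
  fixes \<delta> :: "nat \<Rightarrow> real"
  assumes c: "\<bar>c\<bar> < 1" and step: "eventually (\<lambda>k. \<delta> (Suc k) = c * \<delta> k) sequentially"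
  shows "\<delta> \<longlonglongrightarrow> 0"
proof -
  obtain K where K: "\<And>k. k \<ge> K \<Longrightarrow> \<delta> (Suc k) = c * \<delta> k"
    using step unfolding eventually_sequentially by blast
  have geo: "\<delta> (n + K) = c ^ n * \<delta> K" for n
  proof (induction n)
    case (Suc n)
    have "\<delta> (Suc n + K) = c * \<delta> (n + K)" using K[of "n + K"] by simp
    then show ?case using Suc by simp
  qed simp
  have "(\<lambda>n. c ^ n * \<delta> K) \<longlonglongrightarrow> 0"
    using c by (intro tendsto_mult_left_zero LIMSEQ_power_zero) simp
  then have "(\<lambda>n. \<delta> (n + K)) \<longlonglongrightarrow> 0" unfolding geo .
  then show ?thesis by (rule LIMSEQ_offset)
qed

lemma ratio_ge_if_relative_error_le:
  fixes ared pred \<mu> :: real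
  assumes pos: "pred > 0" and close: "\<bar>ared - pred\<bar> \<le> (1 - \<mu>) / 2 * pred"
  shows "ared / pred \<ge> (1 + \<mu>) / 2"
proof -
  have "pred - (1 - \<mu>) / 2 * pred = (1 + \<mu>) / 2 * pred" by (simp add: field_simps)
  then have "ared \<ge> (1 + \<mu>) / 2 * pred" using abs_le_D2[OF close] by linarith
  then show ?thesis using pos by (simp add: pos_le_divide_eq)
qed

locale ntra_converging = fbe_smooth_near_critical +
  fixes \<delta>0 \<mu>1 \<mu>2 c1 c2 c3 \<beta>2 :: real and x d \<delta> P
  assumes run: "ntra_run f G H g \<gamma> \<delta>0 \<mu>1 \<mu>2 c1 c2 c3 x d \<delta> P"
    and parameters: "0 < \<delta>0" "0 < \<mu>1" "\<mu>1 < \<mu>2" "\<mu>2 < 1" "0 < c1" "c1 < c2" "c2 < 1" "1 < c3"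
    and converges: "x \<longlonglongrightarrow> xstar"
    and \<beta>2: "0 < \<beta>2"
    and sufficient_decrease: "\<And>k. lambda_min (ntra_B H \<gamma> (x k) (P k)) < 0 \<Longrightarrow>
          ntra_model f G g \<gamma> (x k) (ntra_B H \<gamma> (x k) (P k)) 0
            - ntra_model f G g \<gamma> (x k) (ntra_B H \<gamma> (x k) (P k)) (d k)
          \<ge> \<beta>2 * (- lambda_min (ntra_B H \<gamma> (x k) (P k))) * (\<delta> k)\<^sup>2"
begin

definition "Bk k = ntra_B H \<gamma> (x k) (P k)"
definition "pred k = ntra_model f G g \<gamma> (x k) (Bk k) 0 - ntra_model f G g \<gamma> (x k) (Bk k) (d k)"
definition "ared k = \<phi>\<gamma> (x k) - \<phi>\<gamma> (x k + d k)"
definition "ratio k = ared k / pred k"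

lemma ntra_step:
  "P k \<in> clarke_jac (prox g \<gamma>) (fwd (x k)) \<and> norm (d k) \<le> \<delta> k \<and>
   x (Suc k) = (if ratio k < \<mu>1 then x k else x k + d k) \<and>
   \<delta> (Suc k) = (if ratio k < \<mu>1 then c1 * \<delta> k else if ratio k < \<mu>2 then c2 * \<delta> k else c3 * \<delta> k)"
  using run unfolding ntra_run_def Let_def ratio_def ared_def pred_def Bk_def fwd_def by blast

lemma radius_pos: "\<delta> k > 0"
proof (induction k)
  case 0 then show ?case using run parameters unfolding ntra_run_def by simp
next
  case (Suc k) then show ?case using ntra_step[of k] parameters by auto
qed

lemma eventually_small_increment:
  assumes "r > 0"
  shows "eventually (\<lambda>k. norm (x (Suc k) - x k) < r) sequentially"
proof -
  have "(\<lambda>k. x (Suc k) - x k) \<longlonglongrightarrow> 0"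
    using tendsto_diff[OF LIMSEQ_Suc[OF converges] converges] by simp
  then have "(\<lambda>k. norm (x (Suc k) - x k)) \<longlonglongrightarrow> 0" by (rule tendsto_norm_zero)
  then show ?thesis using assms by (rule order_tendstoD(2))
qed

lemma eventually_in_nbhd: "eventually (\<lambda>k. x k \<in> nbhd) sequentially"
  using converges open_nbhd xstar_in_nbhd by (rule topological_tendstoD)

text \<open>Near \<open>x\<^sup>\<star>\<close> the Clarke Jacobian of the prox is a singleton, so the model matrix is \<open>B\<close>.\<close>

lemma eventually_pred_eq:
  "eventually (\<lambda>k. Bk k = B (x k) \<and>
     pred k = - (fbe_grad (x k) \<bullet> d k) - 1/2 * (d k \<bullet> (B (x k) *v d k))) sequentially"
  using eventually_in_nbhd
proof eventually_elim
  case (elim k)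
  then have V: "fwd (x k) \<in> V" unfolding nbhd_def by auto
  then have "P k = J (x k)" using ntra_step[of k] clarke_jac_fwd by auto
  then have "Bk k = B (x k)" unfolding Bk_def B_def by simp
  then show ?case unfolding pred_def ntra_model_def grad_fbe[OF V] by simp
qed

lemma eventually_pred_ge_if_negative_curvature:
  assumes neg: "v \<bullet> (B xstar *v v) < 0"
  obtains \<kappa> where "\<kappa> > 0" "eventually (\<lambda>k. pred k \<ge> \<kappa> * (\<delta> k)\<^sup>2) sequentially"
proof -
  have v: "v \<noteq> 0" using neg by auto
  define q where "q = v \<bullet> (B xstar *v v) / (v \<bullet> v)"
  have q: "q < 0" unfolding q_def using neg v by (simp add: divide_neg_pos)
  have "(\<lambda>k. B (x k) *v v) \<longlonglongrightarrow> B xstar *v v"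
    using bounded_bilinear.tendsto[OF bounded_bilinear_matrix_vector_mult
        isCont_tendsto_compose[OF isCont_B converges] tendsto_const] by simp
  then have "(\<lambda>k. v \<bullet> (B (x k) *v v) / (v \<bullet> v)) \<longlonglongrightarrow> q"
    unfolding q_def by (intro tendsto_intros) (use v in auto)
  moreover have "q < q / 2" using q by simp
  ultimately have "eventually (\<lambda>k. v \<bullet> (B (x k) *v v) / (v \<bullet> v) < q / 2) sequentially"
    by (rule order_tendstoD(2))
  with eventually_in_nbhd eventually_pred_eq
  have "eventually (\<lambda>k. pred k \<ge> \<beta>2 * (- q / 2) * (\<delta> k)\<^sup>2) sequentially"
  proof eventually_elim
    case (elim k)
    then have "fwd (x k) \<in> V" unfolding nbhd_def by auto
    then have "lambda_min (B (x k)) \<le> v \<bullet> (B (x k) *v v) / (v \<bullet> v)"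
      by (intro lambda_min_le_rayleigh_quotient B_symmetric v)
    then have "lambda_min (Bk k) < q / 2" using elim by (metis order_le_less_trans)
    then have "pred k \<ge> \<beta>2 * (- lambda_min (Bk k)) * (\<delta> k)\<^sup>2"
      using q sufficient_decrease[of k] unfolding pred_def Bk_def by simp
    moreover have "\<beta>2 * (- lambda_min (Bk k)) * (\<delta> k)\<^sup>2 \<ge> \<beta>2 * (- q / 2) * (\<delta> k)\<^sup>2"
      using \<open>lambda_min (Bk k) < q / 2\<close> \<beta>2 by (intro mult_right_mono mult_left_mono) auto
    ultimately show ?case by linarith
  qed
  moreover have "\<beta>2 * (- q / 2) > 0" using \<beta>2 q by (simp add: mult_pos_neg)
  ultimately show ?thesis using that by blast
qed

lemma eventually_ared_close_to_pred:
  assumes \<epsilon>: "\<epsilon> > 0"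
  obtains r where "r > 0"
    "eventually (\<lambda>k. norm (d k) < r \<longrightarrow> \<bar>ared k - pred k\<bar> \<le> \<epsilon> * (norm (d k))\<^sup>2) sequentially"
proof -
  obtain r where r: "r > 0" "ball xstar r \<subseteq> nbhd" and taylor: "\<And>z h. z \<in> ball xstar r \<Longrightarrow>
      z + h \<in> ball xstar r \<Longrightarrow>
      \<bar>\<phi>\<gamma> (z + h) - \<phi>\<gamma> z - fbe_grad z \<bullet> h - 1/2 * (h \<bullet> (B z *v h))\<bar> \<le> \<epsilon> * (norm h)\<^sup>2"
    by (rule fbe_taylor[OF \<epsilon>]) blast
  have "eventually (\<lambda>k. x k \<in> ball xstar (r / 2)) sequentially"
    using converges r(1) by (intro topological_tendstoD) auto
  then have "eventually (\<lambda>k. norm (d k) < r / 2 \<longrightarrow>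
      \<bar>ared k - pred k\<bar> \<le> \<epsilon> * (norm (d k))\<^sup>2) sequentially"
    using eventually_pred_eq
  proof eventually_elim
    case (elim k)
    show ?case
    proof
      assume dk: "norm (d k) < r / 2"
      have "dist xstar (x k) < r / 2" using elim by simp
      moreover have "dist xstar (x k + d k) \<le> dist xstar (x k) + norm (d k)"
        using dist_triangle[of xstar "x k + d k" "x k"] by (simp add: dist_norm)
      ultimately have "dist xstar (x k) < r \<and> dist xstar (x k + d k) < r"
        using dk r(1) by (intro conjI; linarith)
      then have "\<bar>\<phi>\<gamma> (x k + d k) - \<phi>\<gamma> (x k) - fbe_grad (x k) \<bullet> d k - 1/2 * (d k \<bullet> (B (x k) *v d k))\<bar>
          \<le> \<epsilon> * (norm (d k))\<^sup>2"
        by (intro taylor) simp_all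
      moreover have "ared k - pred k
          = - (\<phi>\<gamma> (x k + d k) - \<phi>\<gamma> (x k) - fbe_grad (x k) \<bullet> d k - 1/2 * (d k \<bullet> (B (x k) *v d k)))"
        using elim unfolding ared_def by simp
      ultimately show "\<bar>ared k - pred k\<bar> \<le> \<epsilon> * (norm (d k))\<^sup>2" by (simp only: abs_minus_cancel)
    qed
  qed
  moreover have "r / 2 > 0" using r(1) by simp
  ultimately show ?thesis using that by blast
qed

text \<open>If the predicted decrease dominates \<open>\<delta>\<^sub>k\<^sup>2\<close>, the Taylor error \<open>o(\<delta>\<^sub>k\<^sup>2)\<close> of short steps
  cannot spoil the ratio test.\<close>

lemma eventually_short_step_very_successful:
  assumes \<kappa>: "\<kappa> > 0" and pred_ge: "eventually (\<lambda>k. pred k \<ge> \<kappa> * (\<delta> k)\<^sup>2) sequentially"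
  obtains r where "r > 0"
    "eventually (\<lambda>k. norm (d k) < r \<longrightarrow> \<delta> (Suc k) = c3 * \<delta> k) sequentially"
proof -
  define \<epsilon> where "\<epsilon> = \<kappa> * (1 - \<mu>2) / 2"
  have \<epsilon>: "\<epsilon> > 0" unfolding \<epsilon>_def using \<kappa> parameters by simp
  obtain r where r: "r > 0" and close:
    "eventually (\<lambda>k. norm (d k) < r \<longrightarrow> \<bar>ared k - pred k\<bar> \<le> \<epsilon> * (norm (d k))\<^sup>2) sequentially"
    using eventually_ared_close_to_pred[OF \<epsilon>] by blast
  from close pred_ge have "eventually (\<lambda>k. norm (d k) < r \<longrightarrow> \<delta> (Suc k) = c3 * \<delta> k) sequentially"
  proof eventually_elim
    case (elim k)
    show ?case
    proof
      assume "norm (d k) < r"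
      then have "\<bar>ared k - pred k\<bar> \<le> \<epsilon> * (norm (d k))\<^sup>2" using elim by simp
      also have "\<dots> \<le> \<epsilon> * (\<delta> k)\<^sup>2"
        using ntra_step[of k] \<epsilon> by (intro mult_left_mono power_mono) auto
      also have "\<dots> = (1 - \<mu>2) / 2 * (\<kappa> * (\<delta> k)\<^sup>2)" unfolding \<epsilon>_def by simp
      also have "\<dots> \<le> (1 - \<mu>2) / 2 * pred k"
        using elim parameters by (intro mult_left_mono) auto
      finally have "\<bar>ared k - pred k\<bar> \<le> (1 - \<mu>2) / 2 * pred k" .
      moreover have "\<kappa> * (\<delta> k)\<^sup>2 > 0" using \<kappa> radius_pos[of k] by simp
      then have "pred k > 0" using elim by linarith
      ultimately have "ratio k \<ge> (1 + \<mu>2) / 2"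
        unfolding ratio_def by (rule ratio_ge_if_relative_error_le[rotated])
      then have "\<not> ratio k < \<mu>1" "\<not> ratio k < \<mu>2" using parameters by auto
      then show "\<delta> (Suc k) = c3 * \<delta> k" using ntra_step[of k] by simp
    qed
  qed
  with r show ?thesis by (rule that)
qed

lemma eventually_long_step_rejected:
  assumes "r > 0"
  shows "eventually (\<lambda>k. norm (d k) \<ge> r \<longrightarrow> \<delta> (Suc k) = c1 * \<delta> k) sequentially"
  using eventually_small_increment[OF assms]
proof eventually_elim
  case (elim k)
  show ?case
  proof
    assume long: "norm (d k) \<ge> r"
    have "ratio k < \<mu>1"
    proof (rule ccontr)
      assume "\<not> ratio k < \<mu>1"
      then have "x (Suc k) = x k + d k" using ntra_step[of k] by simp
      then show False using elim long by simp
    qed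
    then show "\<delta> (Suc k) = c1 * \<delta> k" using ntra_step[of k] by simp
  qed
qed

lemma radius_eventually_ge:
  assumes "\<kappa> > 0" "eventually (\<lambda>k. pred k \<ge> \<kappa> * (\<delta> k)\<^sup>2) sequentially"
  obtains \<eta> where "\<eta> > 0" "eventually (\<lambda>k. \<delta> k \<ge> \<eta>) sequentially"
proof -
  obtain r where r: "r > 0"
    and short: "eventually (\<lambda>k. norm (d k) < r \<longrightarrow> \<delta> (Suc k) = c3 * \<delta> k) sequentially"
    using eventually_short_step_very_successful[OF assms] by blast
  from short eventually_long_step_rejected[OF r]
  have radius_step: "eventually (\<lambda>k. \<delta> (Suc k) \<ge> min (\<delta> k) (c1 * r)) sequentially"
  proof eventually_elim
    case (elim k)
    show ?case
    proof (cases "norm (d k) < r")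
      case True
      have "\<delta> k \<le> c3 * \<delta> k" using mult_right_mono[of 1 c3 "\<delta> k"] parameters radius_pos[of k] by simp
      then show ?thesis using elim True by simp
    next
      case False
      then have "c1 * r \<le> c1 * \<delta> k"
        using ntra_step[of k] parameters by (intro mult_left_mono) auto
      then show ?thesis using elim False by simp
    qed
  qed
  have "c1 * r > 0" using r parameters by simp
  from eventually_ge_if_step_ge_min[OF radius_pos this radius_step] that show ?thesis by blast
qed

lemma eventually_pred_small_if_short_step:
  assumes \<epsilon>: "\<epsilon> > 0"
  obtains \<zeta> where "\<zeta> > 0" "eventually (\<lambda>k. norm (d k) < \<zeta> \<longrightarrow> pred k < \<epsilon>) sequentially"
proof -
  define M where "M = norm (B xstar) + 1"
  have M: "M > 0" unfolding M_def by (simp add: add_nonneg_pos)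
  define \<zeta> where "\<zeta> = min 1 (\<epsilon> / (M + 1))"
  have \<zeta>: "\<zeta> > 0" "\<zeta> \<le> 1" "M * \<zeta> < \<epsilon>"
    unfolding \<zeta>_def using \<epsilon> M by (auto simp: min_def field_simps)
  have "(\<lambda>k. fbe_grad (x k)) \<longlonglongrightarrow> 0"
    using isCont_tendsto_compose[OF isCont_fbe_grad converges] fbe_grad_xstar by simp
  then have "(\<lambda>k. norm (fbe_grad (x k))) \<longlonglongrightarrow> 0" by (rule tendsto_norm_zero)
  then have "eventually (\<lambda>k. norm (fbe_grad (x k)) < \<epsilon> / 2) sequentially"
    using \<epsilon> by (intro order_tendstoD(2)) auto
  moreover have "eventually (\<lambda>k. norm (B (x k)) < M) sequentially"
    using tendsto_norm[OF isCont_tendsto_compose[OF isCont_B converges]]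
    unfolding M_def by (rule order_tendstoD(2)) simp
  ultimately have "eventually (\<lambda>k. norm (d k) < \<zeta> \<longrightarrow> pred k < \<epsilon>) sequentially"
    using eventually_pred_eq
  proof eventually_elim
    case (elim k)
    show ?case
    proof
      assume dk: "norm (d k) < \<zeta>"
      have "\<bar>fbe_grad (x k) \<bullet> d k\<bar> \<le> norm (fbe_grad (x k)) * norm (d k)"
        by (rule Cauchy_Schwarz_ineq2)
      also have "\<dots> \<le> \<epsilon> / 2 * 1"
        using elim dk \<zeta> \<epsilon> by (intro mult_mono) auto
      finally have grad_term: "\<bar>fbe_grad (x k) \<bullet> d k\<bar> \<le> \<epsilon> / 2" by simp
      have "(norm (d k))\<^sup>2 \<le> norm (d k) * 1"
        using dk \<zeta> unfolding power2_eq_square by (intro mult_left_mono) auto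
      then have "(norm (d k))\<^sup>2 \<le> \<zeta>" using dk by linarith
      have "\<bar>d k \<bullet> (B (x k) *v d k)\<bar> \<le> norm (B (x k)) * (norm (d k))\<^sup>2"
        using quadratic_form_diff_le[of "d k" "B (x k)" 0] by simp
      also have "\<dots> \<le> M * \<zeta>"
        using elim M \<open>(norm (d k))\<^sup>2 \<le> \<zeta>\<close> by (intro mult_mono) auto
      finally have "\<bar>d k \<bullet> (B (x k) *v d k)\<bar> < \<epsilon>" using \<zeta> by linarith
      then have "- (d k \<bullet> (B (x k) *v d k)) < \<epsilon>" by (simp add: abs_less_iff)
      moreover have "pred k = - (fbe_grad (x k) \<bullet> d k) - 1/2 * (d k \<bullet> (B (x k) *v d k))"
        using elim by simp
      ultimately show "pred k < \<epsilon>" using abs_le_D2[OF grad_term] by linarith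
    qed
  qed
  with \<zeta>(1) show ?thesis by (rule that)
qed

lemma eventually_rejected:
  assumes \<kappa>: "\<kappa> > 0" "eventually (\<lambda>k. pred k \<ge> \<kappa> * (\<delta> k)\<^sup>2) sequentially"
    and \<eta>: "\<eta> > 0" "eventually (\<lambda>k. \<delta> k \<ge> \<eta>) sequentially"
  shows "eventually (\<lambda>k. \<delta> (Suc k) = c1 * \<delta> k) sequentially"
proof -
  have "\<kappa> * \<eta>\<^sup>2 > 0" using \<kappa> \<eta> by simp
  then obtain \<zeta> where \<zeta>: "\<zeta> > 0"
    and small: "eventually (\<lambda>k. norm (d k) < \<zeta> \<longrightarrow> pred k < \<kappa> * \<eta>\<^sup>2) sequentially"
    by (rule eventually_pred_small_if_short_step)
  from small eventually_small_increment[OF \<zeta>] \<kappa>(2) \<eta>(2)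
  show ?thesis
  proof eventually_elim
    case (elim k)
    have "\<kappa> * \<eta>\<^sup>2 \<le> \<kappa> * (\<delta> k)\<^sup>2" using elim \<kappa> \<eta> by (intro mult_left_mono power_mono) auto
    then have long: "\<not> norm (d k) < \<zeta>" using elim by linarith
    have "ratio k < \<mu>1"
    proof (rule ccontr)
      assume "\<not> ratio k < \<mu>1"
      then have "x (Suc k) = x k + d k" using ntra_step[of k] by simp
      then show False using elim long by simp
    qed
    then show ?case using ntra_step[of k] by simp
  qed
qed

lemma fbe_hessian_psd: "v \<bullet> (B xstar *v v) \<ge> 0"
proof (rule ccontr)
  assume "\<not> v \<bullet> (B xstar *v v) \<ge> 0"
  then have "v \<bullet> (B xstar *v v) < 0" by simp
  then obtain \<kappa> where \<kappa>: "\<kappa> > 0" "eventually (\<lambda>k. pred k \<ge> \<kappa> * (\<delta> k)\<^sup>2) sequentially"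
    by (rule eventually_pred_ge_if_negative_curvature)
  then obtain \<eta> where \<eta>: "\<eta> > 0" "eventually (\<lambda>k. \<delta> k \<ge> \<eta>) sequentially"
    by (rule radius_eventually_ge)
  have "\<delta> \<longlonglongrightarrow> 0"
    using geometric_step_tendsto_zero[OF _ eventually_rejected[OF \<kappa> \<eta>]] parameters by simp
  then have "eventually (\<lambda>k. \<delta> k < \<eta>) sequentially" using \<eta>(1) by (rule order_tendstoD(2))
  with \<eta>(2) have "eventually (\<lambda>k. False) sequentially" by eventually_elim simp
  then show False by simp
qed

end

section \<open>Second-order stationarity from a quadratic lower bound\<close>

lemma zero_frechet_subdiffI:
  fixes \<phi> :: "real^'n \<Rightarrow> ereal"
  assumes fin: "\<phi> x = ereal c"
    and lower: "\<And>e. e > 0 \<Longrightarrow> \<exists>r>0. \<forall>h. norm h < r \<longrightarrow> \<phi> (x + h) \<ge> ereal (c - e * (norm h)\<^sup>2)"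
  shows "0 \<in> frechet_subdiff \<phi> x"
  unfolding frechet_subdiff_def
proof (intro CollectI conjI allI impI)
  show "\<bar>\<phi> x\<bar> \<noteq> \<infinity>" using fin by simp
  fix e :: real assume e: "e > 0"
  obtain r where r: "r > 0" and lb: "\<And>h. norm h < r \<Longrightarrow> \<phi> (x + h) \<ge> ereal (c - e * (norm h)\<^sup>2)"
    using lower[OF e] by blast
  show "\<exists>\<eta>>0. \<forall>z. norm (z - x) < \<eta> \<longrightarrow> \<phi> x + ereal (0 \<bullet> (z - x) - e * norm (z - x)) \<le> \<phi> z"
  proof (intro exI[of _ "min r 1"] conjI allI impI)
    show "min r 1 > 0" using r by simp
    fix z assume z: "norm (z - x) < min r 1"
    have "norm (z - x) * norm (z - x) \<le> 1 * norm (z - x)" using z by (intro mult_right_mono) auto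
    then have "e * (norm (z - x))\<^sup>2 \<le> e * norm (z - x)"
      using e by (simp add: power2_eq_square mult_left_mono)
    then have "\<phi> x + ereal (0 \<bullet> (z - x) - e * norm (z - x)) \<le> ereal (c - e * (norm (z - x))\<^sup>2)"
      unfolding fin by simp
    also have "\<dots> \<le> \<phi> z" using lb[of "z - x"] z by simp
    finally show "\<phi> x + ereal (0 \<bullet> (z - x) - e * norm (z - x)) \<le> \<phi> z" .
  qed
qed

lemma second_difference_quotient_ge:
  assumes \<tau>: "\<tau> > 0" and lower: "a \<ge> ereal (c - e * (\<tau>\<^sup>2 * s))"
  shows "(a - ereal c) * ereal (2 / \<tau>\<^sup>2) \<ge> ereal (- 2 * (e * s))"
proof (cases a)
  case (real r)
  have "(- e * (\<tau>\<^sup>2 * s)) * (2 / \<tau>\<^sup>2) \<le> (r - c) * (2 / \<tau>\<^sup>2)"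
    using lower \<tau> unfolding real by (intro mult_right_mono) auto
  also have "(- e * (\<tau>\<^sup>2 * s)) * (2 / \<tau>\<^sup>2) = - 2 * (e * s)"
    using \<tau> by (simp add: field_simps)
  finally show ?thesis unfolding real by simp
qed (use lower \<tau> in auto)

lemma second_subderiv_nonnegI:
  fixes \<phi> :: "real^'n \<Rightarrow> ereal"
  assumes fin: "\<phi> x = ereal c"
    and lower: "\<And>e. e > 0 \<Longrightarrow> \<exists>r>0. \<forall>h. norm h < r \<longrightarrow> \<phi> (x + h) \<ge> ereal (c - e * (norm h)\<^sup>2)"
  shows "second_subderiv \<phi> x 0 w \<ge> 0"
  unfolding second_subderiv_def
proof (subst le_Liminf_iff, intro allI impI)
  fix y :: ereal assume y: "y < 0"
  obtain yr where yr: "y < ereal yr" "yr < 0" using ereal_dense2[OF y] by (auto simp: zero_ereal_def)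
  define W where "W = norm w + 1"
  have W: "W > 0" unfolding W_def by (simp add: add_nonneg_pos)
  define e where "e = - yr / (4 * W\<^sup>2)"
  have e: "e > 0" unfolding e_def using yr W by (simp add: divide_neg_pos)
  obtain r where r: "r > 0" and lb: "\<And>h. norm h < r \<Longrightarrow> \<phi> (x + h) \<ge> ereal (c - e * (norm h)\<^sup>2)"
    using lower[OF e] by blast
  have "eventually (\<lambda>\<tau>::real. 0 < \<tau> \<and> \<tau> < r / W) (at_right 0)"
    unfolding eventually_at_right_field using r W by (intro exI[of _ "r / W"]) auto
  moreover have "eventually (\<lambda>w'. w' \<in> ball w 1) (nhds w)"
    by (rule eventually_nhds_in_open) auto
  ultimately have "eventually (\<lambda>p. (0 < fst p \<and> fst p < r / W) \<and> snd p \<in> ball w 1) (at_right 0 \<times>\<^sub>F nhds w)"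
    by (rule eventually_prodI)
  then show "eventually (\<lambda>p. y < (case p of (\<tau>, w') \<Rightarrow> (\<phi> (x + \<tau> *\<^sub>R w')
      - ereal (real_of_ereal (\<phi> x) + \<tau> * (0 \<bullet> w'))) * ereal (2 / \<tau>\<^sup>2))) (at_right 0 \<times>\<^sub>F nhds w)"
  proof (rule eventually_mono, clarsimp)
    fix \<tau> :: real and w' :: "real^'n"
    assume \<tau>: "0 < \<tau>" "\<tau> < r / W" and w': "dist w w' < 1"
    have w'W: "norm w' < W" unfolding W_def using w' norm_triangle_ineq2[of w' w]
      by (simp add: dist_norm norm_minus_commute)
    have "norm (\<tau> *\<^sub>R w') \<le> \<tau> * W" using \<tau> w'W by (simp add: mult_left_mono less_imp_le)
    also have "\<dots> < r" using \<tau> W by (simp add: pos_less_divide_eq)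
    finally have "norm (\<tau> *\<^sub>R w') < r" .
    from lb[OF this] have L: "\<phi> (x + \<tau> *\<^sub>R w') \<ge> ereal (c - e * (\<tau>\<^sup>2 * (norm w')\<^sup>2))"
      using \<tau> by (simp add: power_mult_distrib)
    have "- 2 * (e * (norm w')\<^sup>2) > yr"
    proof -
      have "(norm w')\<^sup>2 \<le> W\<^sup>2" using w'W by (simp add: power_mono)
      then have "2 * (e * (norm w')\<^sup>2) \<le> 2 * (e * W\<^sup>2)" using e by (simp add: mult_left_mono)
      also have "2 * (e * W\<^sup>2) = - yr / 2" unfolding e_def using W by (simp add: field_simps)
      finally show ?thesis using yr by linarith
    qed
    then have "y < ereal (- 2 * (e * (norm w')\<^sup>2))" using yr(1) by (simp add: less_trans)
    also have "\<dots> \<le> (\<phi> (x + \<tau> *\<^sub>R w') - ereal c) * ereal (2 / \<tau>\<^sup>2)"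
      using second_difference_quotient_ge[OF \<tau>(1) L] .
    finally show "y < (\<phi> (x + \<tau> *\<^sub>R w') - ereal (real_of_ereal (\<phi> x))) * ereal (2 / \<tau>\<^sup>2)"
      unfolding fin by simp
  qed
qed

lemma second_order_stationaryI:
  fixes \<phi> :: "real^'n \<Rightarrow> ereal"
  assumes "\<phi> x = ereal c"
    and "\<And>e. e > 0 \<Longrightarrow> \<exists>r>0. \<forall>h. norm h < r \<longrightarrow> \<phi> (x + h) \<ge> ereal (c - e * (norm h)\<^sup>2)"
  shows "second_order_stationary \<phi> x"
  unfolding second_order_stationary_def
proof (intro conjI allI second_subderiv_nonnegI[OF assms])
  show "0 \<in> limiting_subdiff \<phi> x"
    unfolding limiting_subdiff_def using zero_frechet_subdiffI[OF assms]
    by (intro CollectI exI[of _ "\<lambda>_. x"] exI[of _ "\<lambda>_. 0"]) auto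
qed

context fbe_smooth_near_critical
begin

text \<open>Since \<open>\<phi>\<^sub>\<gamma> \<le> \<phi>\<close> with equality at \<open>x\<^sup>\<star>\<close>, the second-order expansion of \<open>\<phi>\<^sub>\<gamma>\<close>
  (zero gradient, positive semidefinite \<open>B x\<^sup>\<star>\<close>) bounds \<open>\<phi>\<close> from below.\<close>

lemma second_order_stationary_if_psd:
  assumes psd: "\<And>v. v \<bullet> (B xstar *v v) \<ge> 0"
  shows "second_order_stationary (\<lambda>y. ereal (f y) + g y) xstar"
proof (rule second_order_stationaryI)
  show "ereal (f xstar) + g xstar = ereal (\<phi>\<gamma> xstar)" by (rule cost_xstar)
  fix e :: real assume e: "e > 0"
  then obtain r where r: "r > 0" "ball xstar r \<subseteq> nbhd" and taylor: "\<And>z h. z \<in> ball xstar r \<Longrightarrow>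
      z + h \<in> ball xstar r \<Longrightarrow>
      \<bar>\<phi>\<gamma> (z + h) - \<phi>\<gamma> z - fbe_grad z \<bullet> h - 1/2 * (h \<bullet> (B z *v h))\<bar> \<le> e * (norm h)\<^sup>2"
    by (rule fbe_taylor) blast
  show "\<exists>r>0. \<forall>h. norm h < r \<longrightarrow> ereal (f (xstar + h)) + g (xstar + h) \<ge> ereal (\<phi>\<gamma> xstar - e * (norm h)\<^sup>2)"
  proof (intro exI[of _ r] conjI allI impI r(1))
    fix h :: "real^'n" assume "norm h < r"
    then have "xstar + h \<in> ball xstar r" by (simp add: dist_norm)
    then have "\<bar>\<phi>\<gamma> (xstar + h) - \<phi>\<gamma> xstar - 1/2 * (h \<bullet> (B xstar *v h))\<bar> \<le> e * (norm h)\<^sup>2"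
      using taylor[of xstar h] r(1) fbe_grad_xstar by simp
    then have "\<phi>\<gamma> xstar - e * (norm h)\<^sup>2 \<le> \<phi>\<gamma> (xstar + h)" using psd[of h] by linarith
    then have "ereal (\<phi>\<gamma> xstar - e * (norm h)\<^sup>2) \<le> ereal (\<phi>\<gamma> (xstar + h))" by simp
    also have "\<dots> \<le> ereal (f (xstar + h)) + g (xstar + h)" by (rule fbe_le_cost[OF proper \<gamma> prox_set_ne])
    finally show "ereal (f (xstar + h)) + g (xstar + h) \<ge> ereal (\<phi>\<gamma> xstar - e * (norm h)\<^sup>2)" .
  qed
qed

end

lemma ntra_limit_second_order_stationary:
  fixes f :: "real^'n \<Rightarrow> real"
  assumes grad_f: "\<And>x. (f has_derivative (\<lambda>h. G x \<bullet> h)) (at x)"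
    and hess_f: "\<And>x. (G has_derivative (\<lambda>h. H x *v h)) (at x)"
    and "proper_fun g" "lsc_fun g" "weakly_convex \<rho> g" and \<rho>: "\<rho> > 0"
    and "0 < \<gamma>" and \<gamma>: "\<gamma> < 1 / \<rho>"
    and "0 < \<delta>0" "0 < \<mu>1" "\<mu>1 < \<mu>2" "\<mu>2 < 1" "0 < c1" "c1 < c2" "c2 < 1" "1 < c3"
    and "ntra_run f G H g \<gamma> \<delta>0 \<mu>1 \<mu>2 c1 c2 c3 x d \<delta> P" "x \<longlonglongrightarrow> xstar"
    and "xstar \<in> prox_set g \<gamma> (xstar - \<gamma> *\<^sub>R G xstar)"
    and U: "\<exists>U H'. open U \<and> xstar \<in> U \<and> continuous_on U H' \<and>
           (\<forall>y\<in>U. (H has_derivative blinfun_apply (H' y)) (at y))"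
    and V: "\<exists>V D. open V \<and> xstar - \<gamma> *\<^sub>R G xstar \<in> V \<and> continuous_on V D \<and>
           (\<forall>y\<in>V. (prox g \<gamma> has_derivative blinfun_apply (D y)) (at y))"
    and "0 < \<beta>2"
    and "\<forall>k. lambda_min (ntra_B H \<gamma> (x k) (P k)) < 0 \<longrightarrow>
          ntra_model f G g \<gamma> (x k) (ntra_B H \<gamma> (x k) (P k)) 0
            - ntra_model f G g \<gamma> (x k) (ntra_B H \<gamma> (x k) (P k)) (d k)
          \<ge> \<beta>2 * (- lambda_min (ntra_B H \<gamma> (x k) (P k))) * (\<delta> k)\<^sup>2"
  shows "second_order_stationary (\<lambda>y. ereal (f y) + g y) xstar"
proof -
  obtain U H' V D where
    "open U" "xstar \<in> U" "continuous_on U H'" "\<forall>y\<in>U. (H has_derivative blinfun_apply (H' y)) (at y)"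
    "open V" "xstar - \<gamma> *\<^sub>R G xstar \<in> V" "continuous_on V D"
    "\<forall>y\<in>V. (prox g \<gamma> has_derivative blinfun_apply (D y)) (at y)"
    using U V by blast
  moreover have "\<gamma> * \<rho> < 1" using \<rho> \<gamma> by (simp add: less_divide_eq)
  ultimately interpret ntra_converging f G H g \<rho> \<gamma> xstar U H' V D \<delta>0 \<mu>1 \<mu>2 c1 c2 c3 \<beta>2 x d \<delta> P
    using assms by unfold_locales auto
  show ?thesis by (rule second_order_stationary_if_psd[OF fbe_hessian_psd])
qed

theorem theorem4p9:
  fixes f :: "real ^ 'n \<Rightarrow> real" and G :: "real ^ 'n \<Rightarrow> real ^ 'n"
    and H :: "real ^ 'n \<Rightarrow> real ^ 'n ^ 'n" and g :: "real ^ 'n \<Rightarrow> ereal"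
    and Lf \<rho> :: real
  assumes grad_f: "\<And>x. (f has_derivative (\<lambda>h. G x \<bullet> h)) (at x)"
    and hess_f: "\<And>x. (G has_derivative (\<lambda>h. H x *v h)) (at x)"
    and hess_loc_lip: "\<And>x. \<exists>U L. open U \<and> x \<in> U \<and>
                         (\<forall>y\<in>U. \<forall>z\<in>U. norm (H y - H z) \<le> L * norm (y - z))"
    and Lf_pos: "Lf > 0"
    and grad_lip: "\<And>x y. norm (G x - G y) \<le> Lf * norm (x - y)"
    and g_proper: "proper_fun g" and g_lsc: "lsc_fun g"
    and rho_pos: "\<rho> > 0" and g_wc: "weakly_convex \<rho> g"
    and argmin_ne: "\<exists>z. \<forall>y. ereal (f z) + g z \<le> ereal (f y) + g y"
  shows "\<exists>\<gamma>bar>0. \<forall>\<gamma> \<delta>0 \<mu>1 \<mu>2 c1 c2 c3 \<beta>2 (x :: nat \<Rightarrow> real ^ 'n) d \<delta> P xstar.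
     (0 < \<gamma> \<and> \<gamma> < \<gamma>bar \<and> \<gamma> < 1 / Lf \<and> \<gamma> < 1 / \<rho> \<and> 0 < \<delta>0 \<and>
      0 < \<mu>1 \<and> \<mu>1 < \<mu>2 \<and> \<mu>2 < 1 \<and> 0 < c1 \<and> c1 < c2 \<and> c2 < 1 \<and> 1 < c3 \<and>
      bounded {y. ereal (f y) + g y \<le> ereal (f (x 0)) + g (x 0)} \<and>
      ntra_run f G H g \<gamma> \<delta>0 \<mu>1 \<mu>2 c1 c2 c3 x d \<delta> P \<and>
      x \<longlonglongrightarrow> xstar \<and>
      xstar \<in> prox_set g \<gamma> (xstar - \<gamma> *\<^sub>R G xstar) \<and>
      (\<exists>U H'. open U \<and> xstar \<in> U \<and> continuous_on U H' \<and>
               (\<forall>y\<in>U. (H has_derivative blinfun_apply (H' y)) (at y))) \<and>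
      (\<exists>V D. open V \<and> xstar - \<gamma> *\<^sub>R G xstar \<in> V \<and> continuous_on V D \<and>
               (\<forall>y\<in>V. (prox g \<gamma> has_derivative blinfun_apply (D y)) (at y))) \<and>
      0 < \<beta>2 \<and>
      (\<forall>k. lambda_min (ntra_B H \<gamma> (x k) (P k)) < 0 \<longrightarrow>
          ntra_model f G g \<gamma> (x k) (ntra_B H \<gamma> (x k) (P k)) 0
            - ntra_model f G g \<gamma> (x k) (ntra_B H \<gamma> (x k) (P k)) (d k)
          \<ge> \<beta>2 * (- lambda_min (ntra_B H \<gamma> (x k) (P k))) * (\<delta> k)\<^sup>2))
     \<longrightarrow> second_order_stationary (\<lambda>y. ereal (f y) + g y) xstar"
proof (intro exI[of _ "1::real"] conjI allI impI)
  show "(0::real) < 1" by simp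
qed (elim conjE, rule ntra_limit_second_order_stationary[OF grad_f hess_f g_proper g_lsc g_wc rho_pos],
  assumption+)

end
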